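(* Let $3\le q\le n$ be an integer, $\Lambda\subseteq\mathbb{Z}/q\mathbb{Z}$ non-empty, $t\ge1$, $\varepsilon\in[0,1]$, let $g\colon\{0,1\}^m\to\{0,1\}^n$ be $d$-local and $\mathcal{P}_g=g(\mathcal{U}^m)$. Suppose there are $r'\ge1$ non-connected neighborhoods $N_g(i_1),\dots,N_g(i_{r'})$ each of size $s_a=|N_g(i_a)|\le t$, each of which is Type-2, i.e., $\mathcal{P}_g|_{N_g(i_a)}$ has total variation distance at most $\varepsilon$ from the uniform distribution $\mathcal{U}^{s_a}$. If $\varepsilon\le2^{-14t+10}$, then $$\mathcal{P}_g(\mathrm{supp}\,\mathcal{D}_{q,\Lambda})\le 2q\exp\left\{-\frac{r'\cdot2^{-14t+11}}{q^2}\right\}+\begin{cases}|\Lambda|/q & q\text{ odd},\\ 2\max\{|\Lambda_{\mathsf{even}}|,|\Lambda_{\mathsf{odd}}|\}/q & q\text{ even}.\end{cases}$$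
   Context: $\mathcal{U}^s$ is uniform on $\{0,1\}^s$. $\mathcal{D}_{q,\Lambda}$ is uniform over $x\in\{0,1\}^n$ with $|x|\bmod q\in\Lambda$ ($|x|$ the Hamming weight), so $\mathcal{P}_g(\mathrm{supp}\,\mathcal{D}_{q,\Lambda})=\Pr_{z}[|g(z)|\bmod q\in\Lambda]$. For even $q$, $\Lambda_{\mathsf{even}},\Lambda_{\mathsf{odd}}$ are the even, resp. odd, elements of $\Lambda$. A function $g$ is $d$-local if each output bit depends on at most $d$ input bits; $I_g(i)$ is the set of input coordinates on which output $i$ depends; $N_g(i)=\{j: I_g(j)\cap I_g(i)\neq\emptyset\}$. Neighborhoods are non-connected if the sets $\bigcup_{j\in N_g(i_a)}I_g(j)$ are pairwise disjoint. *)

theory Defs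
  imports Complex_Main "HOL-Library.FuncSet"
begin

text \<open>Bit strings in {0,1}^m are functions nat => bool, extensional on {..<m}.\<close>
definition cube :: "nat \<Rightarrow> (nat \<Rightarrow> bool) set" where
  "cube m = ({..<m} \<rightarrow>\<^sub>E (UNIV :: bool set))"

definition unif_prob :: "nat \<Rightarrow> ((nat \<Rightarrow> bool) \<Rightarrow> bool) \<Rightarrow> real" where
  "unif_prob m P = real (card {z \<in> cube m. P z}) / 2 ^ m"

definition hweight :: "nat \<Rightarrow> (nat \<Rightarrow> bool) \<Rightarrow> nat" where
  "hweight n x = card {i \<in> {..<n}. x i}"

definition dep_set :: "nat \<Rightarrow> ((nat \<Rightarrow> bool) \<Rightarrow> (nat \<Rightarrow> bool)) \<Rightarrow> nat \<Rightarrow> nat set" where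
  "dep_set m g i = {j \<in> {..<m}. \<exists>x \<in> cube m. g x i \<noteq> g (x(j := \<not> x j)) i}"

definition local_fun :: "nat \<Rightarrow> nat \<Rightarrow> nat \<Rightarrow> ((nat \<Rightarrow> bool) \<Rightarrow> (nat \<Rightarrow> bool)) \<Rightarrow> bool" where
  "local_fun d m n g \<longleftrightarrow> (\<forall>i<n. card (dep_set m g i) \<le> d)"

text \<open>N_g(i) = {j : I_g(j) \<inter> I_g(i) \<noteq> {}}; the output i itself is always
  regarded as a member of its own neighbourhood.\<close>
definition nbhd :: "nat \<Rightarrow> nat \<Rightarrow> ((nat \<Rightarrow> bool) \<Rightarrow> (nat \<Rightarrow> bool)) \<Rightarrow> nat \<Rightarrow> nat set" where
  "nbhd m n g i = insert i {j \<in> {..<n}. dep_set m g j \<inter> dep_set m g i \<noteq> {}}"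

definition tv_marginal_unif :: "nat \<Rightarrow> ((nat \<Rightarrow> bool) \<Rightarrow> (nat \<Rightarrow> bool)) \<Rightarrow> nat set \<Rightarrow> real" where
  "tv_marginal_unif m g S =
     (1/2) * (\<Sum>y \<in> S \<rightarrow>\<^sub>E (UNIV :: bool set).
        \<bar>unif_prob m (\<lambda>z. restrict (g z) S = y) - 1 / 2 ^ card S\<bar>)"

end

theory Submission
  imports Defs
begin

text \<open>
  Expand the indicator of |g z| mod q \<in> \<Lambda> into the characters z \<mapsto> exp (2\<pi>ik |g z| / q). The
  trivial character and, for even q, the parity character give the main term; every other
  character is exponentially small in r'. Its weight splits into the weights on the disjoint
  neighbourhoods N_g(i_a) plus a remainder that ignores the inputs I_g(i_a), so averaging out
  these inputs one neighbourhood at a time bounds the character by the product over a of the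
  mean modulus of its conditional expectation given the inputs outside I_g(i_a). Each factor is
  at most 1 - 2^(-14t+11)/q^2: a factor close to 1 would make the weight on N_g(i_a) nearly
  constant modulo the order q' of the character on almost every fibre, hence nearly uncorrelated
  with the output bit i_a, whereas closeness of the marginal on N_g(i_a) to uniform forces a
  visible correlation (through the indicator of q' dividing the weight if q' > |N_g(i_a)|, and
  through the character of order q' itself otherwise).
\<close>

section \<open>Averages over the Boolean cube\<close>

abbreviation bits :: "nat set \<Rightarrow> (nat \<Rightarrow> bool) set" where
  "bits A \<equiv> A \<rightarrow>\<^sub>E (UNIV :: bool set)"

lemma finite_bits [simp]: "finite A \<Longrightarrow> finite (bits A)"
  by (intro finite_PiE) auto

lemma card_bits: "finite A \<Longrightarrow> card (bits A) = 2 ^ card A"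
  by (simp add: card_PiE)

lemma restrict_in_bits [simp]: "restrict f A \<in> bits A"
  by (simp add: PiE_def)

lemma finite_cube [simp]: "finite (cube m)"
  unfolding cube_def by simp

lemma card_cube: "card (cube m) = 2 ^ m"
  unfolding cube_def by (simp add: card_bits)

lemma cube_nonempty: "cube m \<noteq> {}"
  using card_cube[of m] by auto

lemma override_on_in_cube:
  "A \<subseteq> {..<m} \<Longrightarrow> z \<in> cube m \<Longrightarrow> x \<in> bits A \<Longrightarrow> override_on z x A \<in> cube m"
  unfolding cube_def override_on_def by (auto simp: PiE_def extensional_def)

lemma sum_override_on_bits:
  fixes F :: "(nat \<Rightarrow> bool) \<Rightarrow> 'a::comm_ring_1"
  assumes A: "A \<subseteq> {..<m}"
  shows "(\<Sum>z\<in>cube m. \<Sum>x\<in>bits A. F (override_on z x A)) = of_nat (2 ^ card A) * (\<Sum>z\<in>cube m. F z)"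
proof -
  have fA: "finite A" using A finite_subset by blast
  let ?split = "\<lambda>(z, x). (override_on z x A, restrict z A)"
  have inv: "?split (?split p) = p" if "p \<in> cube m \<times> bits A" for p
    using that by (auto simp: override_on_def PiE_def extensional_def fun_eq_iff split: prod.splits)
  have maps: "?split p \<in> cube m \<times> bits A" if "p \<in> cube m \<times> bits A" for p
    using that override_on_in_cube[OF A] by (auto split: prod.splits)
  have "(\<Sum>z\<in>cube m. \<Sum>x\<in>bits A. F (override_on z x A)) = (\<Sum>(z, x)\<in>cube m \<times> bits A. F (override_on z x A))"
    by (rule sum.cartesian_product)
  also have "\<dots> = (\<Sum>(w, u)\<in>cube m \<times> bits A. F w)"
    by (rule sum.reindex_bij_witness[where i = ?split and j = ?split]) (use inv maps in auto)
  also have "\<dots> = (\<Sum>w\<in>cube m. of_nat (2 ^ card A) * F w)"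
    by (simp add: sum.cartesian_product[symmetric] card_bits[OF fA])
  finally show ?thesis by (simp add: sum_distrib_left)
qed

definition cube_avg :: "nat \<Rightarrow> ((nat \<Rightarrow> bool) \<Rightarrow> 'a::real_normed_field) \<Rightarrow> 'a" where
  "cube_avg m F = (\<Sum>z\<in>cube m. F z) / 2 ^ m"

lemma cube_avg_cong: "(\<And>z. z \<in> cube m \<Longrightarrow> F z = G z) \<Longrightarrow> cube_avg m F = cube_avg m G"
  unfolding cube_avg_def by (metis sum.cong)

lemma cube_avg_const [simp]: "cube_avg m (\<lambda>_. c) = c"
  unfolding cube_avg_def by (simp add: card_cube)

lemma cube_avg_diff: "cube_avg m (\<lambda>z. F z - G z) = cube_avg m F - cube_avg m G"
  unfolding cube_avg_def by (simp add: sum_subtractf diff_divide_distrib)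

lemma cube_avg_mult_left: "cube_avg m (\<lambda>z. c * F z) = c * cube_avg m F"
  unfolding cube_avg_def by (simp add: sum_distrib_left)

lemma cube_avg_mult_right: "cube_avg m (\<lambda>z. F z * c) = cube_avg m F * c"
  unfolding cube_avg_def by (simp add: sum_distrib_right)

lemma cube_avg_divide: "cube_avg m (\<lambda>z. F z / c) = cube_avg m F / c"
  unfolding cube_avg_def by (simp add: sum_divide_distrib[symmetric])

lemma cube_avg_sum: "cube_avg m (\<lambda>z. \<Sum>l\<in>L. F l z) = (\<Sum>l\<in>L. cube_avg m (F l))"
  unfolding cube_avg_def by (simp add: sum.swap[of _ L] sum_divide_distrib)

lemma Re_cube_avg: "Re (cube_avg m F) = cube_avg m (\<lambda>z. Re (F z))"
proof -
  have "cube_avg m F = (\<Sum>z\<in>cube m. F z) / complex_of_real (2 ^ m)"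
    unfolding cube_avg_def by simp
  then show ?thesis by (simp add: Re_divide_of_real Re_sum cube_avg_def)
qed

lemma norm_cube_avg_le: "norm (cube_avg m F) \<le> cube_avg m (\<lambda>z. norm (F z))"
proof -
  have "norm (cube_avg m F) = norm (\<Sum>z\<in>cube m. F z) / 2 ^ m"
    unfolding cube_avg_def by (simp add: norm_divide norm_power)
  also have "\<dots> \<le> (\<Sum>z\<in>cube m. norm (F z)) / 2 ^ m"
    by (intro divide_right_mono norm_sum) auto
  finally show ?thesis unfolding cube_avg_def by simp
qed

lemma cube_avg_mono: "(\<And>z. z \<in> cube m \<Longrightarrow> F z \<le> G z) \<Longrightarrow> cube_avg m F \<le> (cube_avg m G :: real)"
  unfolding cube_avg_def by (intro divide_right_mono sum_mono) auto

lemma unif_prob_eq_cube_avg: "unif_prob m P = cube_avg m (\<lambda>z. if P z then 1 else 0)"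
proof -
  have "real (card {z \<in> cube m. P z}) = (\<Sum>z\<in>cube m. if P z then 1 else 0)"
    using sum.inter_filter[of "cube m" "\<lambda>_. 1::real" P] by simp
  then show ?thesis unfolding unif_prob_def cube_avg_def by simp
qed

section \<open>Partial averages and independence\<close>

text \<open>Conditional expectation of F given the coordinates of z outside A.\<close>

definition partial_avg :: "nat set \<Rightarrow> ((nat \<Rightarrow> bool) \<Rightarrow> 'a::real_normed_field) \<Rightarrow> (nat \<Rightarrow> bool) \<Rightarrow> 'a" where
  "partial_avg A F z = (\<Sum>x\<in>bits A. F (override_on z x A)) / 2 ^ card A"

lemma partial_avg_eq_mean:
  "finite A \<Longrightarrow> partial_avg A F z = (\<Sum>x\<in>bits A. F (override_on z x A)) / of_nat (card (bits A))"
  unfolding partial_avg_def by (simp add: card_bits)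

lemma cube_avg_partial_avg: "A \<subseteq> {..<m} \<Longrightarrow> cube_avg m (partial_avg A F) = cube_avg m F"
  unfolding cube_avg_def partial_avg_def
  by (simp add: sum_divide_distrib[symmetric] sum_override_on_bits)

definition depends_on :: "nat \<Rightarrow> nat set \<Rightarrow> ((nat \<Rightarrow> bool) \<Rightarrow> 'b) \<Rightarrow> bool" where
  "depends_on m S F \<longleftrightarrow> (\<forall>x\<in>cube m. \<forall>y\<in>cube m. (\<forall>j\<in>S. x j = y j) \<longrightarrow> F x = F y)"

lemma depends_onD:
  "depends_on m S F \<Longrightarrow> x \<in> cube m \<Longrightarrow> y \<in> cube m \<Longrightarrow> (\<And>j. j \<in> S \<Longrightarrow> x j = y j) \<Longrightarrow> F x = F y"
  unfolding depends_on_def by blast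

lemma depends_onI:
  "(\<And>x y. x \<in> cube m \<Longrightarrow> y \<in> cube m \<Longrightarrow> (\<And>j. j \<in> S \<Longrightarrow> x j = y j) \<Longrightarrow> F x = F y) \<Longrightarrow> depends_on m S F"
  unfolding depends_on_def by blast

lemma depends_on_mono: "depends_on m S F \<Longrightarrow> S \<subseteq> S' \<Longrightarrow> depends_on m S' F"
  by (rule depends_onI, erule depends_onD) auto

lemma depends_on_comp: "depends_on m S F \<Longrightarrow> depends_on m S (\<lambda>z. h (F z))"
  unfolding depends_on_def by metis

lemma depends_on_mult:
  "depends_on m S F \<Longrightarrow> depends_on m T G \<Longrightarrow> depends_on m (S \<union> T) (\<lambda>z. F z * G z)"
  unfolding depends_on_def by (metis Un_iff)

lemma depends_on_prod:
  fixes r :: nat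
  shows "(\<And>a. a < r \<Longrightarrow> depends_on m (S a) (F a)) \<Longrightarrow> depends_on m (\<Union>a<r. S a) (\<lambda>z. \<Prod>a<r. F a z)"
proof (induction r)
  case 0
  then show ?case by (simp add: depends_on_def)
next
  case (Suc r)
  have "depends_on m ((\<Union>a<r. S a) \<union> S r) (\<lambda>z. (\<Prod>a<r. F a z) * F r z)"
    using Suc by (intro depends_on_mult) auto
  then show ?case by (simp add: lessThan_Suc Un_commute mult.commute)
qed

lemma depends_on_empty_const:
  "depends_on m {} F \<Longrightarrow> z \<in> cube m \<Longrightarrow> z' \<in> cube m \<Longrightarrow> F z = F z'"
  by (erule depends_onD) auto

lemma partial_avg_mult_left:
  assumes "depends_on m S G" "S \<inter> A = {}" "A \<subseteq> {..<m}" "z \<in> cube m"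
  shows "partial_avg A (\<lambda>w. G w * H w) z = G z * partial_avg A H z"
proof -
  have "G (override_on z x A) = G z" if "x \<in> bits A" for x
    using assms(2)
    by (intro depends_onD[OF assms(1) override_on_in_cube[OF assms(3,4) that] assms(4)])
       (auto simp: override_on_def)
  then show ?thesis unfolding partial_avg_def by (simp add: sum_distrib_left)
qed

lemma depends_on_partial_avg:
  assumes "depends_on m S H" "A \<subseteq> {..<m}"
  shows "depends_on m (S - A) (partial_avg A H)"
proof (rule depends_onI)
  fix z z' assume z: "z \<in> cube m" and z': "z' \<in> cube m" and agree: "\<And>j. j \<in> S - A \<Longrightarrow> z j = z' j"
  have "H (override_on z x A) = H (override_on z' x A)" if "x \<in> bits A" for x
    using agree
    by (intro depends_onD[OF assms(1) override_on_in_cube[OF assms(2) z that] override_on_in_cube[OF assms(2) z' that]])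
       (auto simp: override_on_def)
  then show "partial_avg A H z = partial_avg A H z'"
    unfolding partial_avg_def by (simp cong: sum.cong)
qed

lemma partial_avg_const_if_depends_on:
  assumes "depends_on m A F" "A \<subseteq> {..<m}" "z \<in> cube m"
  shows "partial_avg A F z = cube_avg m F"
proof -
  have const: "depends_on m {} (partial_avg A F)"
    using depends_on_partial_avg[OF assms(1,2)] by simp
  have "cube_avg m F = cube_avg m (partial_avg A F)"
    by (rule cube_avg_partial_avg[OF assms(2), symmetric])
  also have "\<dots> = cube_avg m (\<lambda>_. partial_avg A F z)"
    by (rule cube_avg_cong) (rule depends_on_empty_const[OF const _ assms(3)])
  finally show ?thesis by simp
qed

lemma cube_avg_mult_independent:
  fixes F G :: "(nat \<Rightarrow> bool) \<Rightarrow> 'a::real_normed_field"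
  assumes F: "depends_on m S F" and G: "depends_on m T G" and "S \<inter> T = {}" and S: "S \<subseteq> {..<m}"
  shows "cube_avg m (\<lambda>z. F z * G z) = cube_avg m F * cube_avg m G"
proof -
  have TS: "T \<inter> S = {}" using \<open>S \<inter> T = {}\<close> by blast
  have "cube_avg m (\<lambda>z. F z * G z) = cube_avg m (partial_avg S (\<lambda>z. G z * F z))"
    using cube_avg_partial_avg[OF S, of "\<lambda>z. G z * F z"] by (simp add: mult.commute)
  also have "\<dots> = cube_avg m (\<lambda>z. G z * cube_avg m F)"
    by (rule cube_avg_cong)
       (simp add: partial_avg_mult_left[OF G TS S] partial_avg_const_if_depends_on[OF F S])
  finally show ?thesis by (simp add: cube_avg_mult_right mult.commute)
qed

lemma cube_avg_prod_independent:
  fixes F :: "nat \<Rightarrow> (nat \<Rightarrow> bool) \<Rightarrow> 'a::real_normed_field"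
    and r :: nat
  assumes "\<And>a. a < r \<Longrightarrow> depends_on m (S a) (F a)"
    and "\<And>a. a < r \<Longrightarrow> S a \<subseteq> {..<m}"
    and "\<And>a b. a < r \<Longrightarrow> b < r \<Longrightarrow> a \<noteq> b \<Longrightarrow> S a \<inter> S b = {}"
  shows "cube_avg m (\<lambda>z. \<Prod>a<r. F a z) = (\<Prod>a<r. cube_avg m (F a))"
  using assms
proof (induction r)
  case 0
  then show ?case by simp
next
  case (Suc r)
  have disj: "S r \<inter> (\<Union>a<r. S a) = {}"
  proof -
    have "S r \<inter> S a = {}" if "a < r" for a
      using Suc.prems(3)[of r a] that by simp
    then show ?thesis by blast
  qed
  have "cube_avg m (\<lambda>z. \<Prod>a<Suc r. F a z) = cube_avg m (\<lambda>z. F r z * (\<Prod>a<r. F a z))"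
    by (simp add: mult.commute)
  also have "\<dots> = cube_avg m (F r) * cube_avg m (\<lambda>z. \<Prod>a<r. F a z)"
    by (rule cube_avg_mult_independent[OF _ depends_on_prod disj]) (simp_all add: Suc.prems)
  also have "cube_avg m (\<lambda>z. \<Prod>a<r. F a z) = (\<Prod>a<r. cube_avg m (F a))"
    by (rule Suc.IH) (simp_all add: Suc.prems)
  finally show ?case by (simp add: mult.commute)
qed

section \<open>Locality\<close>

lemma dep_set_subset: "dep_set m g i \<subseteq> {..<m}"
  unfolding dep_set_def by auto

lemma output_eq_if_agree_on_dep_set:
  assumes "x \<in> cube m" "y \<in> cube m" "\<And>j. j \<in> dep_set m g i \<Longrightarrow> x j = y j"
  shows "g x i = g y i"
  using assms(1,3)
proof (induction "card {j\<in>{..<m}. x j \<noteq> y j}" arbitrary: x)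
  case 0
  have "x j = y j" for j
  proof (cases "j < m")
    case False
    then show ?thesis using 0(2) assms(2) by (simp add: cube_def PiE_def extensional_def)
  qed (use 0(1) in auto)
  then show ?case by (simp add: fun_eq_iff)
next
  case (Suc c)
  then have "{j\<in>{..<m}. x j \<noteq> y j} \<noteq> {}" by (metis card.empty nat.distinct(1))
  then obtain j where j: "j < m" "x j \<noteq> y j" by blast
  define x' where "x' = x(j := \<not> x j)"
  have "j \<notin> dep_set m g i" using Suc.prems(2) j by blast
  then have "g x i = g x' i" using j Suc.prems(1) unfolding dep_set_def x'_def by auto
  also have "g x' i = g y i"
  proof (rule Suc.hyps(1))
    have "{j'\<in>{..<m}. x' j' \<noteq> y j'} = {j'\<in>{..<m}. x j' \<noteq> y j'} - {j}"
      using j unfolding x'_def by auto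
    then show "c = card {j'\<in>{..<m}. x' j' \<noteq> y j'}" using Suc.hyps(2) j by simp
    show "x' \<in> cube m" using Suc.prems(1) j
      unfolding x'_def cube_def by (auto simp: PiE_def extensional_def)
    show "x' k = y k" if "k \<in> dep_set m g i" for k
      using Suc.prems(2)[OF that] \<open>j \<notin> dep_set m g i\<close> that unfolding x'_def by auto
  qed
  finally show ?case .
qed

lemma depends_on_dep_set: "depends_on m (dep_set m g i) (\<lambda>z. g z i)"
  by (rule depends_onI) (rule output_eq_if_agree_on_dep_set)

section \<open>Elementary trigonometric estimates\<close>

lemma sin_ge_cubic: "0 \<le> y \<Longrightarrow> y - y ^ 3 / 6 \<le> sin (y::real)"
proof -
  have "\<bar>sin y - (\<Sum>m<3. sin_coeff m * y ^ m)\<bar> \<le> inverse (fact 3) * \<bar>y\<bar> ^ 3"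
    by (rule Maclaurin_sin_bound)
  moreover have "(\<Sum>m<3. sin_coeff m * y ^ m) = y" by (simp add: sin_coeff_def numeral_3_eq_3)
  moreover assume "0 \<le> y"
  then have "inverse (fact 3) * \<bar>y\<bar> ^ 3 = y ^ 3 / 6" by (simp add: fact_numeral)
  ultimately show ?thesis by linarith
qed

lemma sin_pi_frac_ge:
  fixes q r :: nat
  assumes "1 \<le> r" "2 * r \<le> q"
  shows "1 / real q \<le> sin (pi * r / q)"
proof -
  have q2: "real q \<ge> 2" using assms by simp
  define y where "y = pi * r / q"
  have y0: "0 \<le> y" unfolding y_def by simp
  have "y \<le> pi / 2" using assms q2 unfolding y_def by (simp add: field_simps)
  then have y2: "y \<le> 2" using pi_half_less_two by linarith
  have "pi * 1 \<le> pi * r" using assms(1) by (intro mult_left_mono) auto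
  then have "2 \<le> pi * r" using pi_ge_two by linarith
  then have yq: "2 / real q \<le> y" using q2 unfolding y_def by (simp add: field_simps)
  have cubic: "y - y ^ 3 / 6 \<le> sin y" by (rule sin_ge_cubic[OF y0])
  show ?thesis
  proof (cases "y \<le> 3/2")
    case True
    have "y * (y * y) \<le> y * (9/4)"
      using mult_mono[OF True True _ y0] y0 by (intro mult_left_mono) auto
    then have "y ^ 3 \<le> 9 / 4 * y" by (simp add: power3_eq_cube mult.commute)
    then have "5 * y / 8 \<le> sin y" using cubic by linarith
    moreover have "1 / real q \<le> 5 * y / 8" using yq q2 by (simp add: field_simps)
    ultimately show ?thesis unfolding y_def by linarith
  next
    case False
    have "y * (y * y) \<le> y * 4"
      using mult_mono[OF y2 y2 _ y0] y0 by (intro mult_left_mono) auto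
    then have "y ^ 3 \<le> 4 * y" by (simp add: power3_eq_cube mult.commute)
    then have "1/2 \<le> sin y" using False cubic by linarith
    moreover have "1 / real q \<le> 1/2" using q2 by simp
    ultimately show ?thesis unfolding y_def by linarith
  qed
qed

lemma cos_2pi_frac_le:
  fixes q :: nat and j :: int
  assumes q: "q \<ge> 2" and nd: "\<not> int q dvd j"
  shows "cos (2 * pi * j / q) \<le> 1 - 2 / (real q)^2"
proof -
  define r where "r = nat (j mod int q)"
  have "j mod int q \<noteq> 0" "0 \<le> j mod int q" "j mod int q < int q"
    using nd q by (auto simp: dvd_eq_mod_eq_0)
  then have r: "1 \<le> r" "r < q" "int r = j mod int q"
    unfolding r_def by auto
  obtain d where "j = int q * d + int r"
    using r(3) by (metis div_mult_mod_eq mult.commute)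
  then have "2 * pi * j / q = 2 * pi * r / q + 2 * pi * of_int d"
    using q by (simp add: field_simps)
  then have "cos (2 * pi * j / q) = cos (2 * (pi * r / q))"
    by (simp add: cos_add) (simp add: mult.assoc)
  also have "\<dots> = 1 - 2 * (sin (pi * r / q))^2"
    by (rule cos_double_sin)
  finally have cos_sin: "cos (2 * pi * j / q) = 1 - 2 * (sin (pi * r / q))^2" .
  have "1 / real q \<le> sin (pi * r / q)"
  proof (cases "2 * r \<le> q")
    case True
    then show ?thesis using sin_pi_frac_ge r by blast
  next
    case False
    have "1 / real q \<le> sin (pi * (q - r) / q)"
      using sin_pi_frac_ge[of "q - r" q] False r by simp
    also have "pi * (q - r) / q = pi - pi * r / q" using q r by (simp add: field_simps of_nat_diff)
    finally show ?thesis by (simp add: sin_pi_minus)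
  qed
  then have "(1 / real q)^2 \<le> (sin (pi * r / q))^2"
    by (rule power_mono) simp
  then show ?thesis using cos_sin by (simp add: power_divide)
qed

lemma cis_power_eq_if_dvd:
  fixes q u v :: nat
  assumes "q > 0" "int q dvd (int u - int v)"
  shows "cis (2 * pi / q) ^ u = cis (2 * pi / q) ^ v"
proof -
  obtain c where "int u - int v = int q * c" using assms(2) by blast
  then have "real u = real v + real q * of_int c"
    using arg_cong[of _ _ real_of_int] by fastforce
  then have "real u * (2 * pi / q) = real v * (2 * pi / q) + 2 * pi * of_int c"
    using assms(1) by (simp add: field_simps)
  then show ?thesis by (simp add: DeMoivre flip: cis_mult)
qed

lemma norm_one_plus_cis_ge:
  fixes q :: nat assumes "q \<ge> 3"
  shows "1 \<le> cmod (1 + cis (2 * pi / q))"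
proof -
  define \<theta> where "\<theta> = 2 * pi / q"
  have "\<theta> \<le> 2 * pi / 3"
    unfolding \<theta>_def by (rule divide_left_mono) (use assms in auto)
  moreover have "0 \<le> \<theta>" "2 * pi / 3 \<le> pi" unfolding \<theta>_def by auto
  moreover have "cos (2 * pi / 3) = - 1/2"
    using cos_double_cos[of "pi/3"] cos_60 by (simp add: power2_eq_square)
  ultimately have "- 1/2 \<le> cos \<theta>"
    using cos_mono_le_eq[of "2 * pi / 3" \<theta>] by simp
  moreover have "(cmod (1 + cis \<theta>))^2 = (1 + cos \<theta>)^2 + (sin \<theta>)^2"
    by (simp add: cmod_power2)
  then have "(cmod (1 + cis \<theta>))^2 = 2 + 2 * cos \<theta>"
    using sin_cos_squared_add[of \<theta>] by (simp add: power2_eq_square algebra_simps)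
  ultimately have "1\<^sup>2 \<le> (cmod (1 + cis \<theta>))^2" by simp
  then show ?thesis unfolding \<theta>_def by (rule power2_le_imp_le) simp
qed

lemma norm_cis_minus_one_ge:
  fixes q :: nat assumes "q \<ge> 3"
  shows "2 / real q \<le> cmod (cis (2 * pi / q) - 1)"
proof -
  define \<theta> where "\<theta> = 2 * pi / q"
  have "\<not> int q dvd 1" using assms by simp
  then have "cos \<theta> \<le> 1 - 2 / (real q)^2"
    unfolding \<theta>_def using cos_2pi_frac_le[of q 1] assms by simp
  moreover have "(cmod (cis \<theta> - 1))^2 = (cos \<theta> - 1)^2 + (sin \<theta>)^2"
    by (simp add: cmod_power2)
  then have "(cmod (cis \<theta> - 1))^2 = 2 - 2 * cos \<theta>"
    using sin_cos_squared_add[of \<theta>] by (simp add: power2_eq_square algebra_simps)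
  ultimately have "(2 / real q)^2 \<le> (cmod (cis \<theta> - 1))^2" by (simp add: power_divide)
  then show ?thesis unfolding \<theta>_def by (rule power2_le_imp_le) simp
qed

lemma dvd_mult_iff_dvd_div_gcd:
  fixes q k :: nat and e :: int
  assumes "k > 0"
  shows "int q dvd int k * e \<longleftrightarrow> int (q div gcd k q) dvd e"
proof -
  define c q' k' where "c = gcd k q" and "q' = q div c" and "k' = k div c"
  have c: "c > 0" "q = c * q'" "k = c * k'"
    using assms unfolding c_def q'_def k'_def by auto
  have "int q dvd int k * e \<longleftrightarrow> int c * int q' dvd int c * (int k' * e)"
    by (simp add: c(2,3) mult.assoc)
  also have "\<dots> \<longleftrightarrow> int q' dvd int k' * e" using c(1) by simp
  also have "\<dots> \<longleftrightarrow> int q' dvd e"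
    using div_gcd_coprime[of k q] assms unfolding c_def q'_def k'_def
    by (intro coprime_dvd_mult_right_iff) (simp add: coprime_commute)
  finally show ?thesis unfolding c_def q'_def .
qed

lemma div_gcd_ge_3:
  fixes q k :: nat
  assumes "q \<ge> 3" "1 \<le> k" "k < q" "2 * k \<noteq> q"
  shows "q div gcd k q \<ge> 3"
proof -
  define q' where "q' = q div gcd k q"
  have dvd: "int q dvd int k * e \<longleftrightarrow> int q' dvd e" for e
    unfolding q'_def using assms(2) by (intro dvd_mult_iff_dvd_div_gcd) simp
  have "gcd k q \<le> q" "gcd k q > 0" using assms(1,2) by simp_all
  then have "q' \<noteq> 0" unfolding q'_def by (simp add: div_eq_0_iff not_less)
  moreover have "q' \<noteq> 1"
  proof
    assume "q' = 1"
    then have "int q dvd int k * 1" by (simp only: dvd) simp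
    then have "q dvd k" by simp
    then show False using assms(2,3) by (simp add: nat_dvd_not_less)
  qed
  moreover have "q' \<noteq> 2"
  proof
    assume "q' = 2"
    then have "int q dvd int k * 2" by (simp only: dvd) simp
    then have "int q dvd int (k * 2)" by simp
    then have "q dvd k * 2" by (simp only: int_dvd_int_iff)
    then obtain c where c: "k * 2 = q * c" by blast
    have "c < 2"
    proof (rule ccontr)
      assume "\<not> c < 2"
      then have "q * 2 \<le> q * c" by (intro mult_le_mono2) simp
      then show False using c assms(3) by linarith
    qed
    moreover have "c \<noteq> 0" using c assms(2) by (intro notI) simp
    ultimately have "c = 1" by simp
    then show False using c assms(4) by simp
  qed
  ultimately show ?thesis unfolding q'_def by linarith
qed

section \<open>Means of characters over a finite set\<close>

lemma card_pairs_eq_sum: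
  fixes P :: "'x \<times> 'x \<Rightarrow> bool"
  assumes "finite X"
  shows "real (card {p \<in> X \<times> X. P p}) = (\<Sum>x\<in>X. \<Sum>y\<in>X. if P (x,y) then 1 else 0)"
proof -
  have "real (card {p \<in> X \<times> X. P p}) = (\<Sum>p\<in>{p \<in> X \<times> X. P p}. 1)" by simp
  also have "\<dots> = (\<Sum>p\<in>X \<times> X. if P p then 1 else 0)"
    using assms by (intro sum.inter_filter) simp
  also have "\<dots> = (\<Sum>x\<in>X. \<Sum>y\<in>X. if P (x,y) then 1 else 0)"
    by (rule sum.cartesian_product')
  finally show ?thesis .
qed

lemma norm_mean_cis_square:
  fixes \<theta> :: "'x \<Rightarrow> real"
  shows "(cmod ((\<Sum>x\<in>X. cis (\<theta> x)) / of_nat (card X)))^2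
       = (\<Sum>x\<in>X. \<Sum>y\<in>X. cos (\<theta> x - \<theta> y)) / (real (card X))^2"
proof -
  define c where "c = (\<Sum>x\<in>X. cis (\<theta> x)) / of_nat (card X)"
  have "complex_of_real ((cmod c)^2) = c * cnj c" by (rule complex_norm_square)
  also have "\<dots> = (\<Sum>x\<in>X. \<Sum>y\<in>X. cis (\<theta> x - \<theta> y)) / of_real ((real (card X))^2)"
    unfolding c_def by (simp add: sum_product power2_eq_square cis_cnj cis_mult)
  finally have "(cmod c)^2 = Re ((\<Sum>x\<in>X. \<Sum>y\<in>X. cis (\<theta> x - \<theta> y)) / of_real ((real (card X))^2))"
    by (metis Re_complex_of_real)
  then show ?thesis unfolding c_def by (simp add: Re_divide_of_real Re_sum)
qed

lemma le_one_minus_if_square_le: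
  fixes x u :: real
  assumes "0 \<le> x" "x^2 \<le> 1 - 2 * u"
  shows "x \<le> 1 - u"
proof (rule power2_le_imp_le)
  have "(1 - u)^2 = 1 - 2 * u + u^2" by (simp add: power2_diff)
  then show "x^2 \<le> (1 - u)^2" using assms(2) zero_le_power2[of u] by linarith
  show "0 \<le> 1 - u" using assms(1,2) zero_le_power2[of x] by linarith
qed

lemma norm_mean_cis_le:
  fixes X :: "'x set" and w :: "'x \<Rightarrow> nat" and q k :: nat
  assumes fin: "finite X" and ne: "X \<noteq> {}" and q: "q \<ge> 2"
  shows "cmod ((\<Sum>x\<in>X. cis (2*pi*k*w x/q)) / of_nat (card X))
     \<le> 1 - real (card {p \<in> X \<times> X. \<not> int q dvd int k * (int (w (fst p)) - int (w (snd p)))})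
            / (real (card X))^2 / (real q)^2"
proof -
  define N where "N = real (card X)"
  have N0: "N > 0" using fin ne unfolding N_def by (simp add: card_gt_0_iff)
  define bad where "bad x y = (\<not> int q dvd int k * (int (w x) - int (w y)))" for x y
  define u where "u = real (card {p \<in> X \<times> X. bad (fst p) (snd p)}) / N^2 / (real q)^2"
  have "cos (2*pi*k*w x/q - 2*pi*k*w y/q) \<le> 1 - 2 / (real q)^2 * (if bad x y then 1 else 0)" for x y
  proof (cases "bad x y")
    case True
    have "2*pi*k*w x/q - 2*pi*k*w y/q = 2 * pi * of_int (int k * (int (w x) - int (w y))) / q"
      using q by (simp add: field_simps)
    then show ?thesis
      using cos_2pi_frac_le[OF q, of "int k * (int (w x) - int (w y))"] True unfolding bad_def by simp
  qed simp
  then have "(\<Sum>x\<in>X. \<Sum>y\<in>X. cos (2*pi*k*w x/q - 2*pi*k*w y/q))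
      \<le> (\<Sum>x\<in>X. \<Sum>y\<in>X. 1 - 2 / (real q)^2 * (if bad x y then 1 else 0))"
    by (intro sum_mono)
  also have "\<dots> = N^2 - 2 / (real q)^2 * real (card {p \<in> X \<times> X. bad (fst p) (snd p)})"
    unfolding N_def card_pairs_eq_sum[OF fin]
    by (simp add: sum_subtractf sum_distrib_left power2_eq_square)
  finally have "(cmod ((\<Sum>x\<in>X. cis (2*pi*k*w x/q)) / of_nat (card X)))^2 \<le> 1 - 2 * u"
    unfolding norm_mean_cis_square N_def[symmetric] u_def using N0
    by (simp add: divide_right_mono diff_divide_distrib field_simps)
  then show ?thesis
    unfolding u_def N_def bad_def by (rule le_one_minus_if_square_le[OF norm_ge_zero])
qed

lemma covariance_eq_pair_sum:
  fixes t b :: "'x \<Rightarrow> 'a::field_char_0"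
  assumes "finite X" "X \<noteq> {}"
  defines "N \<equiv> of_nat (card X) :: 'a"
  shows "(\<Sum>x\<in>X. t x * b x) / N - (\<Sum>x\<in>X. t x) / N * ((\<Sum>x\<in>X. b x) / N)
       = (\<Sum>x\<in>X. \<Sum>y\<in>X. (t x - t y) * (b x - b y)) / (2 * N^2)"
proof -
  have "N \<noteq> 0" using assms unfolding N_def by simp
  have "(\<Sum>x\<in>X. \<Sum>y\<in>X. (t x - t y) * (b x - b y))
      = (\<Sum>x\<in>X. \<Sum>y\<in>X. t x * b x) + (\<Sum>x\<in>X. \<Sum>y\<in>X. t y * b y)
        - (\<Sum>x\<in>X. \<Sum>y\<in>X. t x * b y) - (\<Sum>x\<in>X. \<Sum>y\<in>X. t y * b x)"
    by (simp add: algebra_simps sum.distrib sum_subtractf)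
  also have "\<dots> = 2 * (N * (\<Sum>x\<in>X. t x * b x) - (\<Sum>x\<in>X. t x) * (\<Sum>x\<in>X. b x))"
  proof -
    have "(\<Sum>x\<in>X. \<Sum>y\<in>X. t x * b x) = N * (\<Sum>x\<in>X. t x * b x)"
      "(\<Sum>x\<in>X. \<Sum>y\<in>X. t y * b y) = N * (\<Sum>x\<in>X. t x * b x)"
      unfolding N_def by (simp_all add: sum_distrib_left)
    moreover have "(\<Sum>x\<in>X. \<Sum>y\<in>X. t x * b y) = (\<Sum>x\<in>X. t x) * (\<Sum>x\<in>X. b x)"
      "(\<Sum>x\<in>X. \<Sum>y\<in>X. t y * b x) = (\<Sum>x\<in>X. t x) * (\<Sum>x\<in>X. b x)"
      by (simp_all add: sum_product mult.commute sum.swap[of "\<lambda>x y. b x * t y"])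
    ultimately show ?thesis by simp
  qed
  finally have "(\<Sum>x\<in>X. \<Sum>y\<in>X. (t x - t y) * (b x - b y)) / (2 * N^2)
      = (N * (\<Sum>x\<in>X. t x * b x) - (\<Sum>x\<in>X. t x) * (\<Sum>x\<in>X. b x)) / N^2"
    by (simp only: mult_divide_mult_cancel_left_if) simp
  then show ?thesis using \<open>N \<noteq> 0\<close> by (simp add: diff_divide_distrib power2_eq_square)
qed

lemma norm_covariance_le:
  fixes X :: "'x set" and w :: "'x \<Rightarrow> nat" and P :: "'x \<Rightarrow> bool"
    and T :: "nat \<Rightarrow> 'a::real_normed_field" and q k :: nat
  assumes fin: "finite X" and ne: "X \<noteq> {}"
    and T: "\<And>u. norm (T u) \<le> 1"
    and T_periodic: "\<And>u v. int q dvd int k * (int u - int v) \<Longrightarrow> T u = T v"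
  shows "norm ((\<Sum>x\<in>X. T (w x) * (if P x then 1 else 0)) / of_nat (card X)
            - (\<Sum>x\<in>X. T (w x)) / of_nat (card X) * ((\<Sum>x\<in>X. (if P x then 1 else 0)) / of_nat (card X)))
     \<le> real (card {p \<in> X \<times> X. \<not> int q dvd int k * (int (w (fst p)) - int (w (snd p)))}) / (real (card X))^2"
proof -
  define bad where "bad x y = (\<not> int q dvd int k * (int (w x) - int (w y)))" for x y
  define b where "b x = (if P x then 1 else (0::'a))" for x
  have pair: "norm ((T (w x) - T (w y)) * (b x - b y)) \<le> 2 * (if bad x y then 1 else 0)" for x y
  proof (cases "bad x y")
    case False
    then show ?thesis unfolding bad_def using T_periodic by simp
  next
    case True
    have "norm (T (w x) - T (w y)) \<le> 2"
      using T[of "w x"] T[of "w y"] norm_triangle_ineq4[of "T (w x)" "T (w y)"] by linarith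
    moreover have "norm (b x - b y) \<le> 1" unfolding b_def by auto
    ultimately have "norm (T (w x) - T (w y)) * norm (b x - b y) \<le> 2 * 1"
      by (intro mult_mono) auto
    then show ?thesis using True by (simp add: norm_mult)
  qed
  have "norm (\<Sum>x\<in>X. \<Sum>y\<in>X. (T (w x) - T (w y)) * (b x - b y))
      \<le> (\<Sum>x\<in>X. \<Sum>y\<in>X. 2 * (if bad x y then 1 else 0))"
    by (rule order_trans[OF norm_sum sum_mono[OF order_trans[OF norm_sum sum_mono[OF pair]]]])
  also have "\<dots> = 2 * real (card {p \<in> X \<times> X. bad (fst p) (snd p)})"
    by (simp add: card_pairs_eq_sum[OF fin] sum_distrib_left)
  finally have "norm (\<Sum>x\<in>X. \<Sum>y\<in>X. (T (w x) - T (w y)) * (b x - b y)) / (2 * (real (card X))^2)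
      \<le> 2 * real (card {p \<in> X \<times> X. bad (fst p) (snd p)}) / (2 * (real (card X))^2)"
    by (rule divide_right_mono) simp
  then show ?thesis
    unfolding b_def[symmetric] covariance_eq_pair_sum[OF fin ne] bad_def
    by (simp add: norm_divide norm_mult norm_power)
qed

section \<open>Marginals close to uniform\<close>

lemma cube_avg_restrict_eq:
  fixes h :: "(nat \<Rightarrow> bool) \<Rightarrow> 'a::real_normed_field"
  assumes N: "finite N"
  shows "cube_avg m (\<lambda>z. h (restrict (g z) N))
       = (\<Sum>v\<in>bits N. of_real (unif_prob m (\<lambda>z. restrict (g z) N = v)) * h v)"
proof -
  have "of_real (unif_prob m (\<lambda>z. restrict (g z) N = v)) * h v
      = (\<Sum>z\<in>cube m. if restrict (g z) N = v then h v else 0) / 2 ^ m" for v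
  proof -
    have "(\<Sum>z\<in>cube m. if restrict (g z) N = v then h v else 0)
        = of_nat (card {z \<in> cube m. restrict (g z) N = v}) * h v"
      by (simp add: sum.inter_filter[symmetric])
    then show ?thesis unfolding unif_prob_def by (simp add: of_real_divide)
  qed
  then have "(\<Sum>v\<in>bits N. of_real (unif_prob m (\<lambda>z. restrict (g z) N = v)) * h v)
      = (\<Sum>z\<in>cube m. \<Sum>v\<in>bits N. if restrict (g z) N = v then h v else 0) / 2 ^ m"
    by (simp add: sum_divide_distrib[symmetric] sum.swap[of _ "bits N"])
  also have "\<dots> = (\<Sum>z\<in>cube m. h (restrict (g z) N)) / 2 ^ m"
    using N by (simp add: sum.delta)
  finally show ?thesis unfolding cube_avg_def by simp
qed

lemma card_Collect_restrict [simp]: "card {j\<in>N. restrict f N j} = card {j\<in>N. f j}"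
  by (rule arg_cong[where f=card]) auto

lemma cube_avg_near_uniform:
  fixes h :: "(nat \<Rightarrow> bool) \<Rightarrow> 'a::real_normed_field"
  assumes N: "finite N" and h_local: "\<And>v. h (restrict v N) = h v" and h: "\<And>v. norm (h v) \<le> 1"
  shows "norm (cube_avg m (\<lambda>z. h (g z)) - (\<Sum>v\<in>bits N. h v) / 2 ^ card N)
         \<le> 2 * tv_marginal_unif m g N"
proof -
  let ?d = "\<lambda>v. unif_prob m (\<lambda>z. restrict (g z) N = v) - 1 / 2 ^ card N"
  have "cube_avg m (\<lambda>z. h (g z)) = cube_avg m (\<lambda>z. h (restrict (g z) N))"
    by (simp add: h_local)
  then have "cube_avg m (\<lambda>z. h (g z)) - (\<Sum>v\<in>bits N. h v) / 2 ^ card N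
      = (\<Sum>v\<in>bits N. of_real (?d v) * h v)"
    by (simp add: cube_avg_restrict_eq[OF N] sum_divide_distrib sum_subtractf[symmetric]
        left_diff_distrib of_real_diff)
  also have "norm \<dots> \<le> (\<Sum>v\<in>bits N. \<bar>?d v\<bar> * norm (h v))"
    by (rule order_trans[OF norm_sum]) (simp only: norm_mult norm_of_real order_refl)
  also have "\<dots> \<le> (\<Sum>v\<in>bits N. \<bar>?d v\<bar>)"
    using h by (intro sum_mono) (simp add: mult_left_le)
  finally show ?thesis unfolding tv_marginal_unif_def by simp
qed

lemma tv_marginal_unif_nonneg: "0 \<le> tv_marginal_unif m g N"
  unfolding tv_marginal_unif_def by (intro mult_nonneg_nonneg sum_nonneg) auto

lemma sum_bits_prod:
  fixes f :: "nat \<Rightarrow> bool \<Rightarrow> 'a::comm_ring_1"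
  assumes "finite N"
  shows "(\<Sum>v\<in>bits N. \<Prod>j\<in>N. f j (v j)) = (\<Prod>j\<in>N. f j True + f j False)"
  using prod_sum_PiE[OF assms, of "\<lambda>_. UNIV" f] by (simp add: UNIV_bool add.commute)

lemma prod_if_eq_remove:
  fixes a b :: "'a::comm_ring_1"
  assumes "finite N" "i \<in> N"
  shows "(\<Prod>j\<in>N. if j = i then a else b) = a * b ^ (card N - 1)"
proof -
  have "(\<Prod>j\<in>N - {i}. if j = i then a else b) = (\<Prod>j\<in>N - {i}. b)"
    by (rule prod.cong) auto
  then show ?thesis using prod.remove[OF assms, of "\<lambda>j. if j = i then a else b"] assms by simp
qed

lemma
  fixes c :: "'a::comm_ring_1"
  assumes N: "finite N" and i: "i \<in> N"
  shows sum_bits_power_card_indicator: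
      "(\<Sum>v\<in>bits N. c ^ card {j\<in>N. v j} * (if v i then 1 else 0)) = c * (1 + c) ^ (card N - 1)"
    and sum_bits_power_card: "(\<Sum>v\<in>bits N. c ^ card {j\<in>N. v j}) = (1 + c) ^ card N"
    and sum_bits_indicator: "(\<Sum>v\<in>bits N. if v i then 1 else 0 :: 'a) = 2 ^ (card N - 1)"
proof -
  have pow: "c ^ card {j\<in>N. v j} = (\<Prod>j\<in>N. if v j then c else 1)" for v
    using prod.inter_filter[OF N, of "\<lambda>_. c" v] by simp
  have ind: "(if v i then 1 else 0 :: 'a) = (\<Prod>j\<in>N. if j = i then (if v j then 1 else 0) else 1)" for v
    using N i by (simp add: prod.delta)
  have "(\<Sum>v\<in>bits N. c ^ card {j\<in>N. v j} * (if v i then 1 else 0))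
      = (\<Sum>v\<in>bits N. \<Prod>j\<in>N. (if v j then c else 1) * (if j = i then (if v j then 1 else 0) else 1))"
    by (simp add: pow ind prod.distrib)
  also have "\<dots> = (\<Prod>j\<in>N. if j = i then c else 1 + c)"
    by (subst sum_bits_prod[OF N]) (intro prod.cong refl, simp)
  finally show "(\<Sum>v\<in>bits N. c ^ card {j\<in>N. v j} * (if v i then 1 else 0)) = c * (1 + c) ^ (card N - 1)"
    by (simp add: prod_if_eq_remove[OF N i])
  show "(\<Sum>v\<in>bits N. c ^ card {j\<in>N. v j}) = (1 + c) ^ card N"
    unfolding pow by (subst sum_bits_prod[OF N]) (simp add: add.commute)
  have "(\<Sum>v\<in>bits N. if v i then 1 else 0 :: 'a) = (\<Prod>j\<in>N. if j = i then 1 else 2)"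
    unfolding ind by (subst sum_bits_prod[OF N]) (intro prod.cong refl, simp)
  then show "(\<Sum>v\<in>bits N. if v i then 1 else 0 :: 'a) = 2 ^ (card N - 1)"
    by (simp add: prod_if_eq_remove[OF N i])
qed

lemma cube_avg_output_near_half:
  assumes N: "finite N" and i: "i \<in> N"
  shows "\<bar>cube_avg m (\<lambda>z. if g z i then 1 else 0) - 1/2\<bar> \<le> 2 * tv_marginal_unif m g N"
proof -
  have "card N \<noteq> 0" using N i by auto
  then have half: "(\<Sum>v\<in>bits N. if v i then 1 else 0 :: real) / 2 ^ card N = 1/2"
    using sum_bits_indicator[OF N i, where 'a=real] by (cases "card N") auto
  have "norm (cube_avg m (\<lambda>z. if g z i then 1 else 0)
      - (\<Sum>v\<in>bits N. if v i then 1 else 0 :: real) / 2 ^ card N) \<le> 2 * tv_marginal_unif m g N"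
    by (rule cube_avg_near_uniform[OF N]) (simp_all add: i)
  then show ?thesis unfolding half by simp
qed

section \<open>A single neighbourhood\<close>

text \<open>It bounds from below the defect of the partial average of the
  character (norm_mean_cis_le) and from above every covariance between the output bit i and a
  q / gcd k q periodic function of the weight (norm_covariance_le).\<close>
definition fibre_spread ::
    "nat \<Rightarrow> ((nat \<Rightarrow> bool) \<Rightarrow> (nat \<Rightarrow> bool)) \<Rightarrow> nat set \<Rightarrow> nat set \<Rightarrow> nat \<Rightarrow> nat \<Rightarrow> (nat \<Rightarrow> bool) \<Rightarrow> real" where
  "fibre_spread m g A N q k z =
     real (card {p \<in> bits A \<times> bits A. \<not> int q dvd int k *
        (int (card {j\<in>N. g (override_on z (fst p) A) j}) - int (card {j\<in>N. g (override_on z (snd p) A) j}))})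
     / (real (card (bits A)))^2"

lemma norm_covariance_le_fibre_spread:
  fixes T :: "nat \<Rightarrow> 'a::real_normed_field" and q k :: nat
  assumes A: "A = dep_set m g i"
    and T: "\<And>u. norm (T u) \<le> 1"
    and T_periodic: "\<And>u v. int q dvd int k * (int u - int v) \<Longrightarrow> T u = T v"
  shows "norm (cube_avg m (\<lambda>z. T (card {j\<in>N. g z j}) * (if g z i then 1 else 0))
             - cube_avg m (\<lambda>z. T (card {j\<in>N. g z j})) * cube_avg m (\<lambda>z. if g z i then 1 else 0))
         \<le> cube_avg m (fibre_spread m g A N q k)"
proof -
  have Am: "A \<subseteq> {..<m}" using A dep_set_subset by simp
  have fA: "finite A" using Am finite_subset by blast
  define b where "b z = (if g z i then 1 else (0::'a))" for z
  define t where "t z = T (card {j\<in>N. g z j})" for z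
  have b: "depends_on m A b"
    unfolding b_def A by (rule depends_on_comp[OF depends_on_dep_set])
  have "cube_avg m (\<lambda>z. t z * b z) - cube_avg m t * cube_avg m b
      = cube_avg m (partial_avg A (\<lambda>z. t z * b z)) - cube_avg m (partial_avg A t) * cube_avg m b"
    by (simp add: cube_avg_partial_avg[OF Am])
  also have "\<dots> = cube_avg m (\<lambda>z. partial_avg A (\<lambda>z. t z * b z) z - partial_avg A t z * partial_avg A b z)"
    by (simp add: cube_avg_diff cube_avg_mult_right partial_avg_const_if_depends_on[OF b Am] cong: cube_avg_cong)
  finally have "norm (cube_avg m (\<lambda>z. t z * b z) - cube_avg m t * cube_avg m b)
      \<le> cube_avg m (\<lambda>z. norm (partial_avg A (\<lambda>z. t z * b z) z - partial_avg A t z * partial_avg A b z))"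
    by (simp add: norm_cube_avg_le)
  also have "\<dots> \<le> cube_avg m (fibre_spread m g A N q k)"
  proof (rule cube_avg_mono)
    fix z
    show "norm (partial_avg A (\<lambda>z. t z * b z) z - partial_avg A t z * partial_avg A b z) \<le> fibre_spread m g A N q k z"
      unfolding fibre_spread_def partial_avg_eq_mean[OF fA] t_def b_def
      by (rule norm_covariance_le[where w="\<lambda>x. card {j\<in>N. g (override_on z x A) j}", OF _ _ T T_periodic])
         (use fA in \<open>auto simp: PiE_eq_empty_iff\<close>)
  qed
  finally show ?thesis unfolding t_def b_def .
qed

lemma cube_avg_norm_partial_avg_cis_le:
  fixes q k :: nat
  assumes A: "A \<subseteq> {..<m}" and q: "q \<ge> 2"
  shows "cube_avg m (\<lambda>z. cmod (partial_avg A (\<lambda>z. cis (2 * pi * k * card {j\<in>N. g z j} / q)) z))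
         \<le> 1 - cube_avg m (fibre_spread m g A N q k) / (real q)^2"
proof -
  have fA: "finite A" using A finite_subset by blast
  have "cube_avg m (\<lambda>z. cmod (partial_avg A (\<lambda>z. cis (2 * pi * k * card {j\<in>N. g z j} / q)) z))
     \<le> cube_avg m (\<lambda>z. 1 - fibre_spread m g A N q k z / (real q)^2)"
  proof (rule cube_avg_mono)
    fix z
    show "cmod (partial_avg A (\<lambda>z. cis (2 * pi * k * card {j\<in>N. g z j} / q)) z)
        \<le> 1 - fibre_spread m g A N q k z / (real q)^2"
      unfolding partial_avg_eq_mean[OF fA] fibre_spread_def
      by (rule norm_mean_cis_le[where w="\<lambda>x. card {j\<in>N. g (override_on z x A) j}", OF _ _ q])
         (use fA in \<open>auto simp: PiE_eq_empty_iff\<close>)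
  qed
  also have "\<dots> = 1 - cube_avg m (fibre_spread m g A N q k) / (real q)^2"
    by (simp add: cube_avg_diff cube_avg_divide)
  finally show ?thesis .
qed

lemma fibre_spread_ge_if_order_exceeds:
  fixes q k q' :: nat
  assumes A: "A = dep_set m g i" and N: "finite N" and i: "i \<in> N"
    and dvd: "\<And>e::int. int q dvd int k * e \<longleftrightarrow> int q' dvd e" and order: "card N < q'"
    and tv: "tv_marginal_unif m g N \<le> \<epsilon>" and eps: "4 * \<epsilon> \<le> 1 / 2 ^ card N"
  shows "(1 / 2 ^ card N - 2 * \<epsilon>) * (1/2 - 2 * \<epsilon>) \<le> cube_avg m (fibre_spread m g A N q k)"
proof -
  define T where "T u = (if int q' dvd int u then 1 else 0::real)" for u :: nat
  have T_periodic: "T u = T v" if "int q dvd int k * (int u - int v)" for u v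
  proof -
    have "int q' dvd (int u - int v)" using that dvd by blast
    then have "int q' dvd (int u - int v) + int v \<longleftrightarrow> int q' dvd int v"
      by (rule dvd_add_right_iff)
    then have "int q' dvd int u \<longleftrightarrow> int q' dvd int v" by simp
    then show ?thesis unfolding T_def by simp
  qed
  have cov: "norm (cube_avg m (\<lambda>z. T (card {j\<in>N. g z j}) * (if g z i then 1 else 0))
      - cube_avg m (\<lambda>z. T (card {j\<in>N. g z j})) * cube_avg m (\<lambda>z. if g z i then 1 else 0))
      \<le> cube_avg m (fibre_spread m g A N q k)"
    by (rule norm_covariance_le_fibre_spread[OF A _ T_periodic]) (simp add: T_def)
  have "T (card {j\<in>N. g z j}) * (if g z i then 1 else 0) = 0" for z
  proof (cases "g z i")
    case True
    then have "0 < card {j\<in>N. g z j}" using N i by (auto simp: card_gt_0_iff)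
    moreover have "card {j\<in>N. g z j} < q'"
      using order card_mono[OF N, of "{j\<in>N. g z j}"] by auto
    ultimately show ?thesis unfolding T_def by (auto dest: dvd_imp_le)
  qed simp
  then have "cube_avg m (\<lambda>z. T (card {j\<in>N. g z j}) * (if g z i then 1 else 0)) = 0"
    by (simp only: cube_avg_const)
  then have cov: "\<bar>cube_avg m (\<lambda>z. T (card {j\<in>N. g z j})) * cube_avg m (\<lambda>z. if g z i then 1 else 0)\<bar>
      \<le> cube_avg m (fibre_spread m g A N q k)"
    using cov by simp
  have T_avg: "1 / 2 ^ card N - 2 * \<epsilon> \<le> cube_avg m (\<lambda>z. T (card {j\<in>N. g z j}))"
  proof -
    have "T (card {j\<in>N. restrict (\<lambda>_. False) N j}) \<le> (\<Sum>v\<in>bits N. T (card {j\<in>N. v j}))"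
      by (rule member_le_sum) (auto simp: T_def N)
    then have "1 \<le> (\<Sum>v\<in>bits N. T (card {j\<in>N. v j}))"
      by (simp only: card_Collect_restrict) (simp add: T_def)
    then have "1 / 2 ^ card N \<le> (\<Sum>v\<in>bits N. T (card {j\<in>N. v j})) / 2 ^ card N"
      by (simp add: divide_right_mono)
    moreover have "norm (cube_avg m (\<lambda>z. T (card {j\<in>N. g z j}))
        - (\<Sum>v\<in>bits N. T (card {j\<in>N. v j})) / 2 ^ card N) \<le> 2 * tv_marginal_unif m g N"
      by (rule cube_avg_near_uniform[OF N]) (simp only: card_Collect_restrict, simp add: T_def)
    ultimately show ?thesis using tv by (simp add: abs_le_iff)
  qed
  have b_avg: "1/2 - 2 * \<epsilon> \<le> cube_avg m (\<lambda>z. if g z i then 1 else 0)"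
    using cube_avg_output_near_half[OF N i, of m g] tv by (simp add: abs_le_iff)
  have "(1::real) / 2 ^ card N \<le> 1" by simp
  then have "0 \<le> 1 / 2 ^ card N - 2 * \<epsilon>" "0 \<le> 1/2 - 2 * \<epsilon>"
    using eps tv tv_marginal_unif_nonneg[of m g N] by linarith+
  then have "(1 / 2 ^ card N - 2 * \<epsilon>) * (1/2 - 2 * \<epsilon>)
      \<le> cube_avg m (\<lambda>z. T (card {j\<in>N. g z j})) * cube_avg m (\<lambda>z. if g z i then 1 else 0)"
    using T_avg b_avg by (intro mult_mono) auto
  with cov show ?thesis by linarith
qed

lemma norm_product_perturbation:
  fixes a1 a2 a3 u1 u2 u3 :: "'a::real_normed_algebra_1"
  assumes "norm (a1 - u1) \<le> e" "norm (a2 - u2) \<le> e" "norm (a3 - u3) \<le> e"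
    and "norm a2 \<le> 1" "norm u3 \<le> 1"
  shows "norm ((a1 - a2 * a3) - (u1 - u2 * u3)) \<le> 3 * e"
proof -
  have "(a1 - a2 * a3) - (u1 - u2 * u3) = (a1 - u1) - a2 * (a3 - u3) - (a2 - u2) * u3"
    by (simp add: algebra_simps)
  also have "norm \<dots> \<le> norm (a1 - u1 - a2 * (a3 - u3)) + norm ((a2 - u2) * u3)"
    by (rule norm_triangle_ineq4)
  also have "\<dots> \<le> norm (a1 - u1) + norm a2 * norm (a3 - u3) + norm (a2 - u2) * norm u3"
    using norm_triangle_ineq4[of "a1 - u1" "a2 * (a3 - u3)"] norm_mult_ineq[of a2 "a3 - u3"]
      norm_mult_ineq[of "a2 - u2" u3] by linarith
  also have "\<dots> \<le> e + 1 * e + e * 1"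
    using assms order_trans[OF norm_ge_zero assms(1)] by (intro add_mono mult_mono) auto
  finally show ?thesis by simp
qed

lemma norm_uniform_covariance_ge:
  fixes q s :: nat
  defines "\<zeta> \<equiv> cis (2 * pi / q)"
  assumes "q \<ge> 3" "s \<ge> 1"
  shows "1 / (real q * 2 ^ s) \<le> norm (\<zeta> * (1 + \<zeta>) ^ (s - 1) / 2 ^ s - (1 + \<zeta>) ^ s / 2 ^ s * (1/2))"
proof -
  obtain s' where s: "s = Suc s'" using assms(3) by (cases s) auto
  have "\<zeta> * (1 + \<zeta>) ^ (s - 1) / 2 ^ s - (1 + \<zeta>) ^ s / 2 ^ s * (1/2) = (1 + \<zeta>) ^ s' * (\<zeta> - 1) / (2 * 2 ^ s)"
    unfolding s by (simp add: field_simps)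
  then have eq: "norm (\<zeta> * (1 + \<zeta>) ^ (s - 1) / 2 ^ s - (1 + \<zeta>) ^ s / 2 ^ s * (1/2))
      = norm (1 + \<zeta>) ^ s' * norm (\<zeta> - 1) / (2 * 2 ^ s)"
    by (simp add: norm_mult norm_divide norm_power)
  have "1 * (2 / real q) \<le> norm (1 + \<zeta>) ^ s' * norm (\<zeta> - 1)"
    unfolding \<zeta>_def using norm_one_plus_cis_ge[OF assms(2)] norm_cis_minus_one_ge[OF assms(2)]
    by (intro mult_mono one_le_power) auto
  then have "1 * (2 / real q) / (2 * 2 ^ s) \<le> norm (1 + \<zeta>) ^ s' * norm (\<zeta> - 1) / (2 * 2 ^ s)"
    by (rule divide_right_mono) simp
  moreover have "1 * (2 / real q) / (2 * 2 ^ s) = 1 / (real q * 2 ^ s)"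
    by simp
  ultimately show ?thesis unfolding eq by simp
qed

lemma fibre_spread_ge_inverse_order:
  fixes q k q' :: nat
  assumes A: "A = dep_set m g i" and N: "finite N" and i: "i \<in> N"
    and dvd: "\<And>e::int. int q dvd int k * e \<longleftrightarrow> int q' dvd e" and q': "q' \<ge> 3"
    and tv: "tv_marginal_unif m g N \<le> \<epsilon>"
  shows "1 / (real q' * 2 ^ card N) - 6 * \<epsilon> \<le> cube_avg m (fibre_spread m g A N q k)"
proof -
  define \<zeta> where "\<zeta> = cis (2 * pi / q')"
  define s where "s = card N"
  have s: "s \<ge> 1" using N i unfolding s_def by (simp add: Suc_le_eq card_gt_0_iff) blast
  define T where "T u = \<zeta> ^ u" for u :: nat
  have T: "norm (T u) \<le> 1" for u unfolding T_def \<zeta>_def by (simp add: norm_power)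
  have T_periodic: "T u = T v" if "int q dvd int k * (int u - int v)" for u v
    unfolding T_def \<zeta>_def using that dvd q' by (intro cis_power_eq_if_dvd) auto
  define a1 a2 a3 where "a1 = cube_avg m (\<lambda>z. T (card {j\<in>N. g z j}) * (if g z i then 1 else 0))"
    and "a2 = cube_avg m (\<lambda>z. T (card {j\<in>N. g z j}))"
    and "a3 = cube_avg m (\<lambda>z. if g z i then 1 else 0::complex)"
  have cov: "norm (a1 - a2 * a3) \<le> cube_avg m (fibre_spread m g A N q k)"
    unfolding a1_def a2_def a3_def by (rule norm_covariance_le_fibre_spread[OF A T T_periodic])
  have "norm (a1 - \<zeta> * (1 + \<zeta>) ^ (s - 1) / 2 ^ s) \<le> 2 * \<epsilon>"
  proof -
    have "norm (a1 - (\<Sum>v\<in>bits N. T (card {j\<in>N. v j}) * (if v i then 1 else 0)) / 2 ^ card N)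
        \<le> 2 * tv_marginal_unif m g N"
      unfolding a1_def
      by (rule cube_avg_near_uniform[OF N]) (simp only: card_Collect_restrict, simp add: i, simp add: T_def \<zeta>_def norm_power)
    then show ?thesis using tv sum_bits_power_card_indicator[OF N i, of \<zeta>] unfolding T_def s_def by simp
  qed
  moreover have "norm (a2 - (1 + \<zeta>) ^ s / 2 ^ s) \<le> 2 * \<epsilon>"
  proof -
    have "norm (a2 - (\<Sum>v\<in>bits N. T (card {j\<in>N. v j})) / 2 ^ card N) \<le> 2 * tv_marginal_unif m g N"
      unfolding a2_def by (rule cube_avg_near_uniform[OF N]) (simp only: card_Collect_restrict, rule T)
    then show ?thesis using tv sum_bits_power_card[OF N i, of \<zeta>] unfolding T_def s_def by simp
  qed
  moreover have "norm (a3 - 1/2) \<le> 2 * \<epsilon>"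
  proof -
    have "norm (a3 - (\<Sum>v\<in>bits N. if v i then 1 else 0) / 2 ^ card N) \<le> 2 * tv_marginal_unif m g N"
      unfolding a3_def by (rule cube_avg_near_uniform[OF N]) (simp_all add: i)
    moreover have "(2::complex) ^ card N = 2 * 2 ^ (card N - 1)"
      using s unfolding s_def by (cases "card N") auto
    ultimately show ?thesis using tv sum_bits_indicator[OF N i, where 'a=complex] by simp
  qed
  moreover have "norm a2 \<le> 1"
  proof -
    have "norm a2 \<le> cube_avg m (\<lambda>z. norm (T (card {j\<in>N. g z j})))"
      unfolding a2_def by (rule norm_cube_avg_le)
    also have "\<dots> \<le> cube_avg m (\<lambda>_. 1)" by (rule cube_avg_mono) (rule T)
    finally show ?thesis by simp
  qed
  ultimately have "norm ((a1 - a2 * a3) - (\<zeta> * (1 + \<zeta>) ^ (s - 1) / 2 ^ s - (1 + \<zeta>) ^ s / 2 ^ s * (1/2)))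
      \<le> 3 * (2 * \<epsilon>)"
    by (intro norm_product_perturbation) auto
  moreover have "1 / (real q' * 2 ^ s) \<le> norm (\<zeta> * (1 + \<zeta>) ^ (s - 1) / 2 ^ s - (1 + \<zeta>) ^ s / 2 ^ s * (1/2))"
    unfolding \<zeta>_def by (rule norm_uniform_covariance_ge[OF q' s])
  ultimately show ?thesis
    using cov norm_triangle_ineq2[of "\<zeta> * (1 + \<zeta>) ^ (s - 1) / 2 ^ s - (1 + \<zeta>) ^ s / 2 ^ s * (1/2)" "a1 - a2 * a3"]
    unfolding s_def by (simp add: norm_minus_commute)
qed

lemma cube_avg_norm_partial_avg_block_le:
  fixes q k t :: nat
  assumes q: "q \<ge> 3" and k: "1 \<le> k" "k < q" "2 * k \<noteq> q"
    and N: "finite N" and i: "i \<in> N" and card_N: "card N \<le> t"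
    and tv: "tv_marginal_unif m g N \<le> \<epsilon>" and eps: "\<epsilon> \<le> 1024 * (1 / 2 ^ t) ^ 14"
  shows "cube_avg m (\<lambda>z. cmod (partial_avg (dep_set m g i) (\<lambda>z. cis (2 * pi * k * card {j\<in>N. g z j} / q)) z))
         \<le> 1 - 2048 * (1 / 2 ^ t) ^ 14 / (real q)^2"
proof -
  define p :: real where "p = 1 / 2 ^ t"
  define \<Gamma> where "\<Gamma> = cube_avg m (fibre_spread m g (dep_set m g i) N q k)"
  define q' where "q' = q div gcd k q"
  have dvd: "\<And>e. int q dvd int k * e \<longleftrightarrow> int q' dvd e"
    unfolding q'_def using k by (intro dvd_mult_iff_dvd_div_gcd) simp
  have q': "q' \<ge> 3" unfolding q'_def using div_gcd_ge_3 q k by blast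
  have p0: "0 < p" unfolding p_def by simp
  have p_N: "p \<le> 1 / 2 ^ card N"
    unfolding p_def using card_N by (intro divide_left_mono power_increasing) auto
  have p_t: "p \<le> 1 / 2 ^ n" if "n \<le> t" for n
    unfolding p_def using that by (intro divide_left_mono power_increasing) auto
  have "card N \<noteq> 0" using N i by auto
  then have t: "t \<ge> 1" using card_N by linarith
  have spread: "2048 * p ^ 14 \<le> \<Gamma>"
  proof (cases "card N < q'")
    case True
    have "p ^ 13 \<le> (1/2) ^ 13" using p_t[OF t] p0 by (intro power_mono) auto
    then have "p * p ^ 13 \<le> p * (1/2) ^ 13" using p0 by (intro mult_left_mono) auto
    then have p14: "p ^ 14 \<le> p / 8192" using power_add[of p 1 13] by (simp add: power_divide)
    then have "\<epsilon> \<le> p / 8" using eps unfolding p_def[symmetric] by simp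
    moreover have "p \<le> 1/2" using p_t[OF t] by simp
    ultimately have "4 * \<epsilon> \<le> 1 / 2 ^ card N" "3 * p / 4 \<le> 1 / 2 ^ card N - 2 * \<epsilon>"
      "3 / 8 \<le> 1/2 - 2 * \<epsilon>" using p_N p0 by linarith+
    then have "(3 * p / 4) * (3 / 8) \<le> \<Gamma>"
      unfolding \<Gamma>_def using p0
      by (intro order_trans[OF mult_mono fibre_spread_ge_if_order_exceeds[OF refl N i dvd True tv]]) auto
    moreover have "2048 * p ^ 14 \<le> (3 * p / 4) * (3 / 8)"
      using p14 p0 by simp
    ultimately show ?thesis by linarith
  next
    case False
    then have "3 \<le> t" using q' card_N by linarith
    have "q' < 2 ^ t" using False card_N less_exp[of t] by linarith
    then have "real q' \<le> 2 ^ t" by (simp flip: of_nat_le_iff)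
    moreover have "(2::real) ^ card N \<le> 2 ^ t" using card_N by (simp add: power_increasing)
    ultimately have "real q' * 2 ^ card N \<le> 2 ^ t * 2 ^ t" by (intro mult_mono) auto
    then have "p ^ 2 \<le> 1 / (real q' * 2 ^ card N)"
      unfolding p_def using q' by (simp add: power2_eq_square divide_le_eq_1 field_simps)
    moreover have "p ^ 12 \<le> (1/8) ^ 12" using p_t[OF \<open>3 \<le> t\<close>] p0 by (intro power_mono) auto
    then have "p ^ 12 \<le> 1/8192" by (simp add: power_divide)
    then have "p ^ 2 * p ^ 12 \<le> p ^ 2 * (1/8192)" by (intro mult_left_mono) auto
    then have "p ^ 14 \<le> p ^ 2 / 8192" using power_add[of p 2 12] by simp
    ultimately show ?thesis
      using fibre_spread_ge_inverse_order[OF refl N i dvd q' tv] eps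
      unfolding \<Gamma>_def p_def[symmetric] by linarith
  qed
  have "cube_avg m (\<lambda>z. cmod (partial_avg (dep_set m g i) (\<lambda>z. cis (2 * pi * k * card {j\<in>N. g z j} / q)) z))
      \<le> 1 - \<Gamma> / (real q)^2"
    unfolding \<Gamma>_def using q by (intro cube_avg_norm_partial_avg_cis_le dep_set_subset) simp
  also have "\<dots> \<le> 1 - 2048 * p ^ 14 / (real q)^2"
    using divide_right_mono[OF spread, of "(real q)^2"] by simp
  finally show ?thesis unfolding p_def .
qed

section \<open>Disjoint neighbourhoods\<close>

lemma cube_avg_mult_prod_eq_partial_avg:
  fixes \<phi> :: "nat \<Rightarrow> (nat \<Rightarrow> bool) \<Rightarrow> 'a::real_normed_field" and A U :: "nat \<Rightarrow> nat set" and r :: nat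
  assumes "\<And>a. a < r \<Longrightarrow> A a \<subseteq> U a"
    and "\<And>a. a < r \<Longrightarrow> U a \<subseteq> {..<m}"
    and "\<And>a b. a < r \<Longrightarrow> b < r \<Longrightarrow> a \<noteq> b \<Longrightarrow> U a \<inter> U b = {}"
    and "\<And>a. a < r \<Longrightarrow> depends_on m (U a) (\<phi> a)"
  shows "depends_on m ({..<m} - (\<Union>a<r. A a)) G \<Longrightarrow>
         cube_avg m (\<lambda>z. G z * (\<Prod>a<r. \<phi> a z)) = cube_avg m (\<lambda>z. G z * (\<Prod>a<r. partial_avg (A a) (\<phi> a) z))"
  using assms
proof (induction r arbitrary: G)
  case 0
  then show ?case by simp
next
  case (Suc r)
  note G = Suc.prems(1) and AU = Suc.prems(2) and U = Suc.prems(3) and disj = Suc.prems(4)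
    and \<phi> = Suc.prems(5)
  have A: "A r \<subseteq> {..<m}" using AU[of r] U[of r] by auto
  have U_disj: "x \<notin> U a" if "x \<in> U r" "a < r" for x a
    using disj[of a r] that by auto
  have A_disj: "x \<notin> A a" if "x \<in> U r" "a < r" for x a
    using U_disj[OF that] AU[of a] that(2) by auto
  define H where "H z = G z * (\<Prod>a<r. \<phi> a z)" for z
  have "depends_on m (({..<m} - (\<Union>a<Suc r. A a)) \<union> (\<Union>a<r. U a)) H"
    unfolding H_def by (rule depends_on_mult[OF G depends_on_prod]) (simp add: \<phi>)
  moreover have "(({..<m} - (\<Union>a<Suc r. A a)) \<union> (\<Union>a<r. U a)) \<inter> A r = {}"
    using U_disj AU[of r] by (auto simp: lessThan_Suc)
  ultimately have "cube_avg m (partial_avg (A r) (\<lambda>z. H z * \<phi> r z))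
      = cube_avg m (\<lambda>z. H z * partial_avg (A r) (\<phi> r) z)"
    by (intro cube_avg_cong partial_avg_mult_left[OF _ _ A])
  then have "cube_avg m (\<lambda>z. G z * (\<Prod>a<Suc r. \<phi> a z))
      = cube_avg m (\<lambda>z. (G z * partial_avg (A r) (\<phi> r) z) * (\<Prod>a<r. \<phi> a z))"
    unfolding cube_avg_partial_avg[OF A] H_def by (simp add: ac_simps)
  also have "\<dots> = cube_avg m (\<lambda>z. (G z * partial_avg (A r) (\<phi> r) z) * (\<Prod>a<r. partial_avg (A a) (\<phi> a) z))"
  proof (rule Suc.IH)
    have "depends_on m (U r - A r) (partial_avg (A r) (\<phi> r))"
      by (rule depends_on_partial_avg[OF \<phi> A]) simp
    then have "depends_on m (({..<m} - (\<Union>a<Suc r. A a)) \<union> (U r - A r)) (\<lambda>z. G z * partial_avg (A r) (\<phi> r) z)"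
      by (rule depends_on_mult[OF G])
    moreover have "({..<m} - (\<Union>a<Suc r. A a)) \<union> (U r - A r) \<subseteq> {..<m} - (\<Union>a<r. A a)"
      using A_disj U[of r] by (auto simp: lessThan_Suc)
    ultimately show "depends_on m ({..<m} - (\<Union>a<r. A a)) (\<lambda>z. G z * partial_avg (A r) (\<phi> r) z)"
      by (rule depends_on_mono)
  qed (simp_all add: AU U disj \<phi>)
  also have "\<dots> = cube_avg m (\<lambda>z. G z * (\<Prod>a<Suc r. partial_avg (A a) (\<phi> a) z))"
    by (simp add: ac_simps)
  finally show ?case .
qed

lemma norm_cube_avg_mult_prod_le:
  fixes \<phi> :: "nat \<Rightarrow> (nat \<Rightarrow> bool) \<Rightarrow> 'a::real_normed_field" and A U :: "nat \<Rightarrow> nat set" and r :: nat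
  assumes AU: "\<And>a. a < r \<Longrightarrow> A a \<subseteq> U a"
    and U: "\<And>a. a < r \<Longrightarrow> U a \<subseteq> {..<m}"
    and disj: "\<And>a b. a < r \<Longrightarrow> b < r \<Longrightarrow> a \<noteq> b \<Longrightarrow> U a \<inter> U b = {}"
    and \<phi>: "\<And>a. a < r \<Longrightarrow> depends_on m (U a) (\<phi> a)"
    and G: "depends_on m ({..<m} - (\<Union>a<r. A a)) G" "\<And>z. norm (G z) \<le> 1"
  shows "norm (cube_avg m (\<lambda>z. G z * (\<Prod>a<r. \<phi> a z)))
         \<le> (\<Prod>a<r. cube_avg m (\<lambda>z. norm (partial_avg (A a) (\<phi> a) z)))"
proof -
  have "norm (cube_avg m (\<lambda>z. G z * (\<Prod>a<r. \<phi> a z)))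
      \<le> cube_avg m (\<lambda>z. norm (G z * (\<Prod>a<r. partial_avg (A a) (\<phi> a) z)))"
    using cube_avg_mult_prod_eq_partial_avg[OF AU U disj \<phi> G(1)] norm_cube_avg_le by simp
  also have "\<dots> \<le> cube_avg m (\<lambda>z. \<Prod>a<r. norm (partial_avg (A a) (\<phi> a) z))"
  proof (rule cube_avg_mono)
    fix z
    have "norm (G z) * (\<Prod>a<r. norm (partial_avg (A a) (\<phi> a) z)) \<le> 1 * (\<Prod>a<r. norm (partial_avg (A a) (\<phi> a) z))"
      by (rule mult_right_mono[OF G(2)]) (simp add: prod_nonneg)
    then show "norm (G z * (\<Prod>a<r. partial_avg (A a) (\<phi> a) z)) \<le> (\<Prod>a<r. norm (partial_avg (A a) (\<phi> a) z))"
      by (simp add: norm_mult prod_norm)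
  qed
  also have "\<dots> = (\<Prod>a<r. cube_avg m (\<lambda>z. norm (partial_avg (A a) (\<phi> a) z)))"
  proof (rule cube_avg_prod_independent[where S=U])
    fix a assume a: "a < r"
    have "A a \<subseteq> {..<m}" using AU[OF a] U[OF a] by blast
    then have "depends_on m (U a - A a) (partial_avg (A a) (\<phi> a))" by (rule depends_on_partial_avg[OF \<phi>[OF a]])
    then have "depends_on m (U a) (partial_avg (A a) (\<phi> a))" by (rule depends_on_mono) auto
    then show "depends_on m (U a) (\<lambda>z. norm (partial_avg (A a) (\<phi> a) z))" by (rule depends_on_comp)
  qed (use U disj in auto)
  finally show ?thesis .
qed

lemma dep_set_nonempty_if_near_uniform:
  assumes N: "finite N" and i: "i \<in> N" and tv: "tv_marginal_unif m g N < 1/4"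
  shows "dep_set m g i \<noteq> {}"
proof
  assume "dep_set m g i = {}"
  obtain z0 where z0: "z0 \<in> cube m" using cube_nonempty by blast
  have "g z i = g z0 i" if "z \<in> cube m" for z
    using output_eq_if_agree_on_dep_set[OF that z0] \<open>dep_set m g i = {}\<close> by blast
  then have "cube_avg m (\<lambda>z. if g z i then 1 else 0) = (if g z0 i then 1 else 0 :: real)"
    by (simp cong: cube_avg_cong)
  then show False
    using cube_avg_output_near_half[OF N i, of m g] tv by (auto split: if_splits)
qed

lemma nbhd_disjoint:
  assumes "(\<Union>j \<in> nbhd m n g i. dep_set m g j) \<inter> (\<Union>j \<in> nbhd m n g i'. dep_set m g j) = {}"
    and "dep_set m g i \<noteq> {}"
  shows "nbhd m n g i \<inter> nbhd m n g i' = {}"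
proof (rule ccontr)
  assume "nbhd m n g i \<inter> nbhd m n g i' \<noteq> {}"
  then obtain j where "j \<in> nbhd m n g i" "j \<in> nbhd m n g i'" by blast
  with assms(1) have "dep_set m g j = {}" by blast
  with \<open>j \<in> nbhd m n g i\<close> assms(2) show False unfolding nbhd_def by auto
qed

lemma finite_nbhd: "finite (nbhd m n g i)"
  unfolding nbhd_def by simp

lemma hweight_split:
  fixes r :: nat
  assumes N_sub: "\<And>a. a < r \<Longrightarrow> N a \<subseteq> {..<n}"
    and N_disj: "\<And>a b. a < r \<Longrightarrow> b < r \<Longrightarrow> a \<noteq> b \<Longrightarrow> N a \<inter> N b = {}"
  shows "hweight n x = card {j \<in> {..<n} - (\<Union>a<r. N a). x j} + (\<Sum>a<r. card {j\<in>N a. x j})"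
proof -
  have fin: "finite (N a)" if "a < r" for a using N_sub[OF that] finite_subset by blast
  have "{j\<in>{..<n}. x j} = {j \<in> {..<n} - (\<Union>a<r. N a). x j} \<union> (\<Union>a<r. {j\<in>N a. x j})"
    using N_sub by blast
  then have "hweight n x = card ({j \<in> {..<n} - (\<Union>a<r. N a). x j} \<union> (\<Union>a<r. {j\<in>N a. x j}))"
    unfolding hweight_def by simp
  also have "\<dots> = card {j \<in> {..<n} - (\<Union>a<r. N a). x j} + card (\<Union>a<r. {j\<in>N a. x j})"
    by (rule card_Un_disjoint) (use fin in auto)
  also have "card (\<Union>a<r. {j\<in>N a. x j}) = (\<Sum>a<r. card {j\<in>N a. x j})"
    using fin N_disj by (intro card_UN_disjoint) auto
  finally show ?thesis .
qed

lemma cis_power: "cis (2 * pi * real k / real q) ^ w = cis (2 * pi * real k * real w / real q)"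
  by (simp add: DeMoivre algebra_simps)

lemma norm_cube_avg_cis_hweight_le:
  fixes r k q :: nat and idx :: "nat \<Rightarrow> nat"
  assumes idx: "\<And>a. a < r \<Longrightarrow> idx a < n"
    and disj: "\<And>a b. a < r \<Longrightarrow> b < r \<Longrightarrow> a \<noteq> b \<Longrightarrow>
      (\<Union>j \<in> nbhd m n g (idx a). dep_set m g j) \<inter> (\<Union>j \<in> nbhd m n g (idx b). dep_set m g j) = {}"
    and nonempty: "\<And>a. a < r \<Longrightarrow> dep_set m g (idx a) \<noteq> {}"
  shows "cmod (cube_avg m (\<lambda>z. cis (2 * pi * k * hweight n (g z) / q)))
         \<le> (\<Prod>a<r. cube_avg m (\<lambda>z. cmod (partial_avg (dep_set m g (idx a))
              (\<lambda>z. cis (2 * pi * k * card {j \<in> nbhd m n g (idx a). g z j} / q)) z)))"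
proof -
  define \<phi> where "\<phi> a z = cis (2 * pi * k * card {j \<in> nbhd m n g (idx a). g z j} / q)" for a z
  define NN where "NN a = nbhd m n g (idx a)" for a
  define U where "U a = (\<Union>j \<in> NN a. dep_set m g j)" for a
  define R where "R = {..<n} - (\<Union>a<r. NN a)"
  define G where "G z = cis (2 * pi * k * card {j\<in>R. g z j} / q)" for z
  have NN_sub: "NN a \<subseteq> {..<n}" if "a < r" for a
    using idx[OF that] unfolding NN_def nbhd_def by auto
  have NN_disj: "NN a \<inter> NN b = {}" if "a < r" "b < r" "a \<noteq> b" for a b
    unfolding NN_def using that by (intro nbhd_disjoint disj nonempty)
  have dep_U: "dep_set m g j \<subseteq> U a" if "j \<in> NN a" for j a
    unfolding U_def using that by blast
  have "cis (2 * pi * k * hweight n (g z) / q) = G z * (\<Prod>a<r. \<phi> a z)" for z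
  proof -
    have "hweight n (g z) = card {j\<in>R. g z j} + (\<Sum>a<r. card {j\<in>NN a. g z j})"
      unfolding R_def by (rule hweight_split[OF NN_sub NN_disj])
    then show ?thesis
      unfolding G_def \<phi>_def NN_def[symmetric] cis_power[symmetric] by (simp add: power_add power_sum)
  qed
  then have "cube_avg m (\<lambda>z. cis (2 * pi * k * hweight n (g z) / q)) = cube_avg m (\<lambda>z. G z * (\<Prod>a<r. \<phi> a z))"
    by simp
  also have "cmod \<dots> \<le> (\<Prod>a<r. cube_avg m (\<lambda>z. cmod (partial_avg (dep_set m g (idx a)) (\<phi> a) z)))"
  proof (rule norm_cube_avg_mult_prod_le)
    show "dep_set m g (idx a) \<subseteq> U a" for a
      by (rule dep_U) (simp add: NN_def nbhd_def)
    show "U a \<subseteq> {..<m}" for a unfolding U_def using dep_set_subset by blast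
    show "U a \<inter> U b = {}" if "a < r" "b < r" "a \<noteq> b" for a b
      unfolding U_def NN_def using disj[OF that] .
    show "depends_on m (U a) (\<phi> a)" for a
    proof (rule depends_onI)
      fix x y assume x: "x \<in> cube m" and y: "y \<in> cube m" and agree: "\<And>j. j \<in> U a \<Longrightarrow> x j = y j"
      have "g x j = g y j" if "j \<in> NN a" for j
        by (rule output_eq_if_agree_on_dep_set[OF x y]) (use dep_U[OF that] agree in blast)
      then have "{j\<in>NN a. g x j} = {j\<in>NN a. g y j}" by auto
      then show "\<phi> a x = \<phi> a y" unfolding \<phi>_def NN_def[symmetric] by simp
    qed
    show "depends_on m ({..<m} - (\<Union>a<r. dep_set m g (idx a))) G"
    proof (rule depends_onI)
      fix x y assume "x \<in> cube m" "y \<in> cube m" and agree: "\<And>j. j \<in> {..<m} - (\<Union>a<r. dep_set m g (idx a)) \<Longrightarrow> x j = y j"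
      have "g x j = g y j" if "j \<in> R" for j
      proof (rule output_eq_if_agree_on_dep_set[OF \<open>x \<in> cube m\<close> \<open>y \<in> cube m\<close>])
        fix u assume u: "u \<in> dep_set m g j"
        have "u \<notin> dep_set m g (idx a)" if "a < r" for a
        proof
          assume "u \<in> dep_set m g (idx a)"
          then have "j \<in> NN a" using u \<open>j \<in> R\<close> unfolding R_def NN_def nbhd_def by auto
          then show False using \<open>j \<in> R\<close> that unfolding R_def by auto
        qed
        then show "x u = y u" using agree u dep_set_subset by blast
      qed
      then have "{j\<in>R. g x j} = {j\<in>R. g y j}" by auto
      then show "G x = G y" unfolding G_def by simp
    qed
    show "cmod (G z) \<le> 1" for z unfolding G_def by simp
  qed
  finally show ?thesis unfolding \<phi>_def .
qed

lemma norm_cube_avg_cis_hweight_le_exp: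
  fixes q k t r :: nat and idx :: "nat \<Rightarrow> nat"
  assumes q: "q \<ge> 3" and k: "1 \<le> k" "k < q" "2 * k \<noteq> q" and t: "t \<ge> 1"
    and idx: "\<And>a. a < r \<Longrightarrow> idx a < n"
    and disj: "\<And>a b. a < r \<Longrightarrow> b < r \<Longrightarrow> a \<noteq> b \<Longrightarrow>
      (\<Union>j \<in> nbhd m n g (idx a). dep_set m g j) \<inter> (\<Union>j \<in> nbhd m n g (idx b). dep_set m g j) = {}"
    and card: "\<And>a. a < r \<Longrightarrow> card (nbhd m n g (idx a)) \<le> t"
    and tv: "\<And>a. a < r \<Longrightarrow> tv_marginal_unif m g (nbhd m n g (idx a)) \<le> \<epsilon>"
    and eps: "\<epsilon> \<le> 1024 * (1 / 2 ^ t) ^ 14"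
  shows "cmod (cube_avg m (\<lambda>z. cis (2 * pi * k * hweight n (g z) / q)))
         \<le> exp (- (real r * (2048 * (1 / 2 ^ t) ^ 14 / (real q)^2)))"
proof -
  define \<delta> where "\<delta> = 2048 * (1 / 2 ^ t) ^ 14 / (real q)^2"
  define \<phi> where "\<phi> a z = cis (2 * pi * k * card {j \<in> nbhd m n g (idx a). g z j} / q)" for a z
  have "(1 / 2 ^ t :: real) ^ 14 \<le> (1/2) ^ 14"
    using power_increasing[OF t, of "2::real"] by (intro power_mono) (auto simp: divide_le_eq)
  then have p14: "(1 / 2 ^ t :: real) ^ 14 \<le> 1/16384" by (simp add: power_divide)
  then have "\<epsilon> < 1/4" using eps by linarith
  have "(3::real) * 3 \<le> real q * real q" using q by (intro mult_mono) auto
  then have "\<delta> \<le> 1" using p14 unfolding \<delta>_def by (simp add: divide_le_eq power2_eq_square)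
  have "dep_set m g (idx a) \<noteq> {}" if "a < r" for a
    using tv[OF that] \<open>\<epsilon> < 1/4\<close>
    by (intro dep_set_nonempty_if_near_uniform[where N="nbhd m n g (idx a)"] finite_nbhd)
       (auto simp: nbhd_def)
  then have "cmod (cube_avg m (\<lambda>z. cis (2 * pi * k * hweight n (g z) / q)))
      \<le> (\<Prod>a<r. cube_avg m (\<lambda>z. cmod (partial_avg (dep_set m g (idx a)) (\<phi> a) z)))"
    unfolding \<phi>_def
    using norm_cube_avg_cis_hweight_le[where idx=idx and r=r and n=n and m=m and g=g and k=k and q=q, OF idx disj]
    by blast
  also have "\<dots> \<le> (\<Prod>a<r. 1 - \<delta>)"
  proof (rule prod_mono)
    fix a assume "a \<in> {..<r}"
    then have a: "a < r" by simp
    have "cube_avg m (\<lambda>z. cmod (partial_avg (dep_set m g (idx a)) (\<phi> a) z)) \<le> 1 - \<delta>"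
      unfolding \<phi>_def \<delta>_def
      by (rule cube_avg_norm_partial_avg_block_le[OF q k finite_nbhd _ card[OF a] tv[OF a] eps])
         (simp add: nbhd_def)
    moreover have "0 \<le> cube_avg m (\<lambda>z. cmod (partial_avg (dep_set m g (idx a)) (\<phi> a) z))"
      using cube_avg_mono[of m "\<lambda>_. 0" "\<lambda>z. cmod (partial_avg (dep_set m g (idx a)) (\<phi> a) z)"] by simp
    ultimately show "0 \<le> cube_avg m (\<lambda>z. cmod (partial_avg (dep_set m g (idx a)) (\<phi> a) z))
        \<and> cube_avg m (\<lambda>z. cmod (partial_avg (dep_set m g (idx a)) (\<phi> a) z)) \<le> 1 - \<delta>" by simp
  qed
  also have "\<dots> \<le> exp (- \<delta>) ^ r"
    using exp_ge_add_one_self[of "- \<delta>"] \<open>\<delta> \<le> 1\<close> by (simp add: power_mono)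
  also have "\<dots> = exp (- (real r * \<delta>))"
    by (simp add: exp_of_nat_mult[symmetric])
  finally show ?thesis unfolding \<delta>_def .
qed

section \<open>Fourier inversion modulo q\<close>

lemma sum_cos_roots_of_unity:
  fixes q :: nat and d :: int
  assumes q: "q > 0"
  shows "(\<Sum>k<q. cos (2 * pi * real k * of_int d / real q)) = (if int q dvd d then real q else 0)"
proof -
  define z where "z = cis (2 * pi * of_int d / real q)"
  have zk: "z ^ k = cis (2 * pi * real k * of_int d / real q)" for k
    unfolding z_def DeMoivre by (simp add: algebra_simps)
  have "(\<Sum>k<q. cos (2 * pi * real k * of_int d / real q)) = Re (\<Sum>k<q. z ^ k)"
    by (simp add: zk Re_sum)
  also have "\<dots> = (if int q dvd d then real q else 0)"
  proof (cases "int q dvd d")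
    case True
    then obtain c where "d = int q * c" by blast
    then have "2 * pi * of_int d / real q = 2 * pi * of_int c" using q by simp
    then have "z = 1" unfolding z_def by (metis cis_multiple_2pi Ints_of_int)
    then show ?thesis using True by simp
  next
    case False
    then have q2: "q \<ge> 2" using q by (cases "q = 1") auto
    have "Re z \<le> 1 - 2 / (real q)^2"
      unfolding z_def using cos_2pi_frac_le[OF q2 False] by simp
    then have "z \<noteq> 1" using q2 by auto
    moreover have "real q * (2 * pi * of_int d / real q) = 2 * pi * of_int d" using q by simp
    then have "z ^ q = 1" unfolding z_def DeMoivre by (metis cis_multiple_2pi Ints_of_int)
    ultimately have "(\<Sum>k<q. z ^ k) = 0" using sum_gp_strict[of z q] by simp
    then show ?thesis using False by simp
  qed
  finally show ?thesis .
qed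

lemma indicator_mod_in_eq_fourier:
  fixes q w :: nat
  assumes q: "q > 0" and L: "\<Lambda> \<subseteq> {..<q}"
  shows "(if w mod q \<in> \<Lambda> then 1 else 0::real)
       = (\<Sum>l\<in>\<Lambda>. (\<Sum>k<q. cos (2 * pi * real k * of_int (int w - int l) / real q)) / real q)"
proof -
  have "finite \<Lambda>" using L finite_subset by blast
  then have "(if w mod q \<in> \<Lambda> then 1 else 0::real) = (\<Sum>l\<in>\<Lambda>. if w mod q = l then 1 else 0)"
    by (simp add: sum.delta)
  also have "\<dots> = (\<Sum>l\<in>\<Lambda>. (\<Sum>k<q. cos (2 * pi * real k * of_int (int w - int l) / real q)) / real q)"
  proof (rule sum.cong[OF refl])
    fix l assume "l \<in> \<Lambda>"
    then have "l < q" using L by auto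
    then have "w mod q = l \<longleftrightarrow> int w mod int q = int l mod int q"
      by (auto simp flip: of_nat_mod)
    also have "\<dots> \<longleftrightarrow> int q dvd (int w - int l)"
      by (rule mod_eq_dvd_iff)
    finally have "w mod q = l \<longleftrightarrow> int q dvd (int w - int l)" .
    then show "(if w mod q = l then 1 else 0) = (\<Sum>k<q. cos (2 * pi * real k * of_int (int w - int l) / real q)) / real q"
      using sum_cos_roots_of_unity[OF q, of "int w - int l"] q by simp
  qed
  finally show ?thesis .
qed

lemma cube_avg_cos_shift_le:
  fixes W :: "(nat \<Rightarrow> bool) \<Rightarrow> nat" and k q l :: nat
  shows "cube_avg m (\<lambda>z. cos (2 * pi * real k * of_int (int (W z) - int l) / real q))
         \<le> cmod (cube_avg m (\<lambda>z. cis (2 * pi * real k * real (W z) / real q)))"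
proof -
  define c where "c = cis (- (2 * pi * real k * real l / real q))"
  have "cos (2 * pi * real k * of_int (int (W z) - int l) / real q)
      = Re (cis (2 * pi * real k * real (W z) / real q) * c)" for z
    unfolding c_def cis_mult by (simp add: diff_divide_distrib right_diff_distrib)
  then have "cube_avg m (\<lambda>z. cos (2 * pi * real k * of_int (int (W z) - int l) / real q))
      = Re (cube_avg m (\<lambda>z. cis (2 * pi * real k * real (W z) / real q)) * c)"
    by (simp add: Re_cube_avg cube_avg_mult_right[symmetric])
  also have "\<dots> \<le> cmod (cube_avg m (\<lambda>z. cis (2 * pi * real k * real (W z) / real q)) * c)"
    by (rule complex_Re_le_cmod)
  also have "\<dots> = cmod (cube_avg m (\<lambda>z. cis (2 * pi * real k * real (W z) / real q)))"
    unfolding c_def by (simp add: norm_mult)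
  finally show ?thesis .
qed

lemma cube_avg_cos_half_turn:
  fixes W :: "(nat \<Rightarrow> bool) \<Rightarrow> nat" and h l :: nat
  assumes "h > 0"
  shows "cube_avg m (\<lambda>z. cos (2 * pi * real h * of_int (int (W z) - int l) / real (2 * h)))
         = (-1) ^ l * cube_avg m (\<lambda>z. (-1) ^ W z)"
proof -
  have "cos (2 * pi * real h * of_int (int (W z) - int l) / real (2 * h)) = (-1) ^ l * (-1) ^ W z" for z
  proof -
    have "2 * pi * real h * of_int (int (W z) - int l) / real (2 * h) = real (W z) * pi - real l * pi"
      using assms by (simp add: field_simps)
    then show ?thesis by (simp add: cos_diff)
  qed
  then show ?thesis by (simp add: cube_avg_mult_left)
qed

lemma sum_cube_avg_cos_le:
  fixes q l :: nat and W :: "(nat \<Rightarrow> bool) \<Rightarrow> nat" and \<eta> :: real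
  assumes q: "q \<ge> 2" and \<eta>: "0 \<le> \<eta>"
    and char: "\<And>k. 1 \<le> k \<Longrightarrow> k < q \<Longrightarrow> 2 * k \<noteq> q \<Longrightarrow>
      cmod (cube_avg m (\<lambda>z. cis (2 * pi * k * W z / q))) \<le> \<eta>"
  shows "(\<Sum>k<q. cube_avg m (\<lambda>z. cos (2 * pi * real k * of_int (int (W z) - int l) / real q)))
         \<le> 1 + (if even q then (-1) ^ l * cube_avg m (\<lambda>z. (-1) ^ W z) else 0) + real (q - 1) * \<eta>"
proof -
  define x where "x = (-1) ^ l * cube_avg m (\<lambda>z. (-1::real) ^ W z)"
  define B where "B k = (if k = 0 then 1 else 0) + (if even q \<and> k = q div 2 then x else 0)
    + (if k \<noteq> 0 then \<eta> else 0)" for k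
  have "cube_avg m (\<lambda>z. cos (2 * pi * real k * of_int (int (W z) - int l) / real q)) \<le> B k"
    if "k < q" for k
  proof -
    consider "k = 0" | "k \<noteq> 0" "even q" "k = q div 2" | "k \<noteq> 0" "2 * k \<noteq> q"
      by (cases "k = 0"; cases "2 * k = q") auto
    then show ?thesis
    proof cases
      case 2
      then have "real q = real (2 * k)" by simp
      then have "cube_avg m (\<lambda>z. cos (2 * pi * real k * of_int (int (W z) - int l) / real q)) = x"
        unfolding x_def using 2 by (simp only:) (rule cube_avg_cos_half_turn, simp)
      then show ?thesis using 2 \<eta> unfolding B_def by simp
    next
      case 3
      have "cube_avg m (\<lambda>z. cos (2 * pi * real k * of_int (int (W z) - int l) / real q))
          \<le> cmod (cube_avg m (\<lambda>z. cis (2 * pi * real k * real (W z) / real q)))"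
        by (rule cube_avg_cos_shift_le)
      also have "\<dots> \<le> \<eta>" by (rule char) (use 3 that in auto)
      also have "\<eta> = B k" using 3 unfolding B_def by auto
      finally show ?thesis .
    qed (use q in \<open>simp add: B_def div_eq_0_iff\<close>)
  qed
  then have "(\<Sum>k<q. cube_avg m (\<lambda>z. cos (2 * pi * real k * of_int (int (W z) - int l) / real q)))
      \<le> (\<Sum>k<q. B k)"
    by (intro sum_mono) auto
  also have "(\<Sum>k<q. B k) = 1 + (if even q then x else 0) + real (q - 1) * \<eta>"
  proof -
    have "(\<Sum>k<q. if even q \<and> k = q div 2 then x else 0) = (if even q then x else 0)"
      using q by (cases "even q") (simp_all add: sum.delta)
    moreover have "(\<Sum>k<q. if k \<noteq> 0 then \<eta> else 0) = (\<Sum>k\<in>{..<q} - {0}. \<eta>)"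
      by (rule sum.mono_neutral_cong_right) auto
    ultimately show ?thesis using q by (simp add: B_def sum.distrib)
  qed
  finally show ?thesis unfolding x_def .
qed

lemma card_add_signed_sum_le:
  fixes \<Lambda> :: "nat set" and \<rho> :: real
  assumes "finite \<Lambda>" "\<bar>\<rho>\<bar> \<le> 1"
  shows "real (card \<Lambda>) + \<rho> * (\<Sum>l\<in>\<Lambda>. (-1) ^ l)
         \<le> 2 * real (max (card {x\<in>\<Lambda>. even x}) (card {x\<in>\<Lambda>. odd x}))"
proof -
  define a b where "a = real (card {x\<in>\<Lambda>. even x})" and "b = real (card {x\<in>\<Lambda>. odd x})"
  have split: "\<Lambda> = {x\<in>\<Lambda>. even x} \<union> {x\<in>\<Lambda>. odd x}" "{x\<in>\<Lambda>. even x} \<inter> {x\<in>\<Lambda>. odd x} = {}"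
    by auto
  have "real (card \<Lambda>) = a + b"
    unfolding a_def b_def using assms(1) by (subst split(1)) (simp add: card_Un_disjoint[OF _ _ split(2)])
  moreover have "(\<Sum>l\<in>\<Lambda>. (-1::real) ^ l) = a - b"
    unfolding a_def b_def using assms(1) by (subst split(1)) (simp add: sum.union_disjoint[OF _ _ split(2)])
  moreover have "\<rho> * (a - b) \<le> \<bar>a - b\<bar>"
    using assms(2) abs_ge_self[of "\<rho> * (a - b)"] mult_right_mono[OF assms(2) abs_ge_zero[of "a - b"]]
    by (simp add: abs_mult)
  ultimately show ?thesis unfolding a_def b_def by (simp add: of_nat_max)
qed

lemma unif_prob_mod_in_le:
  fixes q :: nat and W :: "(nat \<Rightarrow> bool) \<Rightarrow> nat" and \<eta> :: real
  assumes q: "q \<ge> 2" and L: "\<Lambda> \<subseteq> {..<q}" and \<eta>: "0 \<le> \<eta>"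
    and char: "\<And>k. 1 \<le> k \<Longrightarrow> k < q \<Longrightarrow> 2 * k \<noteq> q \<Longrightarrow>
      cmod (cube_avg m (\<lambda>z. cis (2 * pi * k * W z / q))) \<le> \<eta>"
  shows "unif_prob m (\<lambda>z. W z mod q \<in> \<Lambda>)
         \<le> real q * \<eta> + (if odd q then real (card \<Lambda>) / real q
              else 2 * real (max (card {x \<in> \<Lambda>. even x}) (card {x \<in> \<Lambda>. odd x})) / real q)"
proof -
  define \<rho> where "\<rho> = cube_avg m (\<lambda>z. (-1::real) ^ W z)"
  have fin: "finite \<Lambda>" using L finite_subset by blast
  have card: "real (card \<Lambda>) \<le> real q" using card_mono[OF _ L] by simp
  have "\<bar>\<rho>\<bar> \<le> 1"
    unfolding \<rho>_def using norm_cube_avg_le[of m "\<lambda>z. (-1::real) ^ W z"] by simp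
  have "unif_prob m (\<lambda>z. W z mod q \<in> \<Lambda>)
      = (\<Sum>l\<in>\<Lambda>. (\<Sum>k<q. cube_avg m (\<lambda>z. cos (2 * pi * real k * of_int (int (W z) - int l) / real q))) / real q)"
    using q L by (simp add: unif_prob_eq_cube_avg indicator_mod_in_eq_fourier cube_avg_sum cube_avg_divide)
  also have "\<dots> \<le> (\<Sum>l\<in>\<Lambda>. (1 + (if even q then (-1) ^ l * \<rho> else 0) + real (q - 1) * \<eta>) / real q)"
    unfolding \<rho>_def by (intro sum_mono divide_right_mono sum_cube_avg_cos_le[OF q \<eta> char]) auto
  also have "\<dots> = (real (card \<Lambda>) + (if even q then \<rho> * (\<Sum>l\<in>\<Lambda>. (-1) ^ l) else 0)) / real q
      + real (card \<Lambda>) * real (q - 1) * \<eta> / real q"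
    by (simp add: sum_divide_distrib[symmetric] sum.distrib sum_distrib_left algebra_simps add_divide_distrib)
  also have "real (card \<Lambda>) * real (q - 1) * \<eta> / real q \<le> real q * \<eta>"
  proof -
    have "real (card \<Lambda>) * real (q - 1) \<le> real q * real q"
      using card by (intro mult_mono) auto
    then have "real (card \<Lambda>) * real (q - 1) * \<eta> \<le> real q * real q * \<eta>"
      using \<eta> by (rule mult_right_mono)
    then show ?thesis using q by (simp add: divide_le_eq mult.commute mult.left_commute)
  qed
  finally have bound: "unif_prob m (\<lambda>z. W z mod q \<in> \<Lambda>)
      \<le> (real (card \<Lambda>) + (if even q then \<rho> * (\<Sum>l\<in>\<Lambda>. (-1) ^ l) else 0)) / real q + real q * \<eta>"
    by simp
  show ?thesis
  proof (cases "odd q")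
    case False
    have "(real (card \<Lambda>) + \<rho> * (\<Sum>l\<in>\<Lambda>. (-1) ^ l)) / real q
        \<le> 2 * real (max (card {x\<in>\<Lambda>. even x}) (card {x\<in>\<Lambda>. odd x})) / real q"
      by (rule divide_right_mono[OF card_add_signed_sum_le[OF fin \<open>\<bar>\<rho>\<bar> \<le> 1\<close>]]) simp
    then show ?thesis using bound False by simp
  qed (use bound in simp)
qed

lemma two_powr_affine: "(2::real) powr (- 14 * real t + real c) = 2 ^ c * (1 / 2 ^ t) ^ 14"
proof -
  have "(2::real) powr (- 14 * real t + real c) = 2 powr (real c) * 2 powr (- (real (14 * t)))"
    by (simp add: powr_add[symmetric])
  also have "\<dots> = 2 ^ c / 2 ^ (14 * t)"
    using powr_realpow[of 2 "14 * t"] powr_realpow[of 2 c] by (simp add: powr_minus divide_inverse)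
  also have "\<dots> = 2 ^ c * (1 / 2 ^ t) ^ 14"
    by (simp add: power_mult power_divide mult.commute[of 14 t])
  finally show ?thesis .
qed

theorem mainTheorem16:
  fixes q n m d t r' :: nat
    and \<Lambda> :: "nat set"
    and \<epsilon> :: real
    and g :: "(nat \<Rightarrow> bool) \<Rightarrow> (nat \<Rightarrow> bool)"
    and idx :: "nat \<Rightarrow> nat"
  assumes "3 \<le> q" and "q \<le> n"
    and "\<Lambda> \<subseteq> {..<q}" and "\<Lambda> \<noteq> {}"
    and "1 \<le> t"
    and "0 \<le> \<epsilon>" and "\<epsilon> \<le> 1"
    and "local_fun d m n g"
    and "1 \<le> r'"
    and "\<forall>a<r'. idx a < n"
    and "\<forall>a<r'. \<forall>b<r'. a \<noteq> b \<longrightarrow>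
           (\<Union>j \<in> nbhd m n g (idx a). dep_set m g j) \<inter>
           (\<Union>j \<in> nbhd m n g (idx b). dep_set m g j) = {}"
    and "\<forall>a<r'. card (nbhd m n g (idx a)) \<le> t"
    and "\<forall>a<r'. tv_marginal_unif m g (nbhd m n g (idx a)) \<le> \<epsilon>"
    and "\<epsilon> \<le> 2 powr (- 14 * real t + 10)"
  shows "unif_prob m (\<lambda>z. hweight n (g z) mod q \<in> \<Lambda>)
         \<le> 2 * real q * exp (- (real r' * 2 powr (- 14 * real t + 11)) / (real q)^2)
           + (if odd q then real (card \<Lambda>) / real q
              else 2 * real (max (card {x \<in> \<Lambda>. even x}) (card {x \<in> \<Lambda>. odd x})) / real q)"
proof -
  define \<eta> where "\<eta> = exp (- (real r' * 2 powr (- 14 * real t + 11)) / (real q)^2)"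
  have eps: "\<epsilon> \<le> 1024 * (1 / 2 ^ t) ^ 14"
    using assms(14) two_powr_affine[of t 10] by simp
  have "(2::real) powr (- 14 * real t + 11) = 2048 * (1 / 2 ^ t) ^ 14"
    using two_powr_affine[of t 11] by simp
  then have \<eta>: "\<eta> = exp (- (real r' * (2048 * (1 / 2 ^ t) ^ 14 / (real q)^2)))"
    unfolding \<eta>_def by simp
  have "cmod (cube_avg m (\<lambda>z. cis (2 * pi * k * hweight n (g z) / q))) \<le> \<eta>"
    if "1 \<le> k" "k < q" "2 * k \<noteq> q" for k
    unfolding \<eta> using assms(1,5,10-13) that
    by (intro norm_cube_avg_cis_hweight_le_exp[where idx=idx, OF _ _ _ _ _ _ _ _ _ eps]) auto
  then have "unif_prob m (\<lambda>z. hweight n (g z) mod q \<in> \<Lambda>)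
      \<le> real q * \<eta> + (if odd q then real (card \<Lambda>) / real q
              else 2 * real (max (card {x \<in> \<Lambda>. even x}) (card {x \<in> \<Lambda>. odd x})) / real q)"
    using assms(1,3) by (intro unif_prob_mod_in_le[where W="\<lambda>z. hweight n (g z)"]) (auto simp: \<eta>_def)
  moreover have "real q * \<eta> \<le> 2 * real q * \<eta>" unfolding \<eta>_def by simp
  ultimately show ?thesis unfolding \<eta>_def by linarith
qed

end
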